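(* The sequence $(A;A^*;\{E_i\}_{i=0}^d;\{E^*_i\}_{i=0}^d)$ is a Leonard system if and only if both of the following hold: (i) there exists a decomposition of $V$ which is split with respect to the orderings $E_0,E_1,\ldots,E_d$ and $E^*_0,E^*_1,\ldots,E^*_d$; (ii) there exists an antiautomorphism $\dagger$ of $\mathcal A$ such that $A^\dagger=A$ and $A^{*\dagger}=A^*$.
   Context: Let $\mathbb K$ be a field, $d\ge 0$ an integer, and $\mathcal A$ a $\mathbb K$-algebra isomorphic to $\mathrm{Mat}_{d+1}(\mathbb K)$, with identity $I$. An element of $\mathcal A$ is multiplicity-free if it has $d+1$ mutually distinct eigenvalues, all in $\mathbb K$; for such $A$ with eigenvalues $\theta_0,\ldots,\theta_d$, the primitive idempotent associated with $\theta_i$ is $E_i=\prod_{j\ne i}(A-\theta_jI)/(\theta_i-\theta_j)$. Standing setup: $A,A^*$ are multiplicity-free elements of $\mathcal A$ ($A^*$ is just a name, not an adjoint); $E_0,\ldots,E_d$ is an ordering of the primitive idempotents of $A$ and $\theta_i$ is the eigenvalue of $A$ for $E_i$; $E^*_0,\ldots,E^*_d$ is an ordering of the primitive idempotents of $A^*$ and $\theta^*_i$ is the eigenvalue of $A^*$ for $E^*_i$; $V$ is an irreducible left $\mathcal A$-module. A decomposition of $V$ is a sequence $U_0,\ldots,U_d$ of 1-dimensional subspaces with $V=U_0+\cdots+U_d$ (direct sum); it is split (with respect to the orderings $E_0,\ldots,E_d$ and $E^*_0,\ldots,E^*_d$) if $(A-\theta_iI)U_i=U_{i+1}$ for $0\le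 i\le d-1$, $(A-\theta_dI)U_d=0$, $(A^*-\theta^*_iI)U_i=U_{i-1}$ for $1\le i\le d$, and $(A^*-\theta^*_0I)U_0=0$. The sequence $(A;A^*;\{E_i\};\{E^*_i\})$ is a Leonard system if for all $0\le i,j\le d$: $E^*_iAE^*_j=0$ if $|i-j|>1$, $E^*_iAE^*_j\ne0$ if $|i-j|=1$, $E_iA^*E_j=0$ if $|i-j|>1$, and $E_iA^*E_j\ne0$ if $|i-j|=1$. An antiautomorphism of $\mathcal A$ is a $\mathbb K$-linear bijection $\sigma:\mathcal A\to\mathcal A$ with $(XY)^\sigma=Y^\sigma X^\sigma$ for all $X,Y$. *)

theory Defs
  imports "Jordan_Normal_Form.Char_Poly"
begin

text \<open>The algebra is realised concretely as the (d+1) x (d+1) matrices over the field,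
  and V as the column vectors of length d+1 (the irreducible module).\<close>

definition multiplicity_free :: "nat \<Rightarrow> 'a::field mat \<Rightarrow> bool" where
  "multiplicity_free d A \<longleftrightarrow> A \<in> carrier_mat (Suc d) (Suc d) \<and>
     finite {k. eigenvalue A k} \<and> card {k. eigenvalue A k} = Suc d"

text \<open>theta is an ordering of the eigenvalues of A (equivalently of its primitive idempotents).\<close>
definition eigen_ordering :: "nat \<Rightarrow> 'a::field mat \<Rightarrow> (nat \<Rightarrow> 'a) \<Rightarrow> bool" where
  "eigen_ordering d A \<theta> \<longleftrightarrow> inj_on \<theta> {0..d} \<and> \<theta> ` {0..d} = {k. eigenvalue A k}"

definition prim_idem :: "nat \<Rightarrow> 'a::field mat \<Rightarrow> (nat \<Rightarrow> 'a) \<Rightarrow> nat \<Rightarrow> 'a mat" where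
  "prim_idem d A \<theta> i = foldr (\<lambda>j M. (inverse (\<theta> i - \<theta> j) \<cdot>\<^sub>m (A - \<theta> j \<cdot>\<^sub>m 1\<^sub>m (Suc d))) * M)
      (filter (\<lambda>j. j \<noteq> i) [0..<Suc d]) (1\<^sub>m (Suc d))"

definition mat_image :: "'a::field mat \<Rightarrow> 'a vec set \<Rightarrow> 'a vec set" where
  "mat_image M U = (\<lambda>v. M *\<^sub>v v) ` U"

definition one_dim_subspace :: "nat \<Rightarrow> 'a::field vec set \<Rightarrow> bool" where
  "one_dim_subspace n U \<longleftrightarrow> (\<exists>u. u \<in> carrier_vec n \<and> u \<noteq> 0\<^sub>v n \<and> U = {c \<cdot>\<^sub>v u | c. True})"

definition decomposition :: "nat \<Rightarrow> (nat \<Rightarrow> 'a::field vec set) \<Rightarrow> bool" where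
  "decomposition d U \<longleftrightarrow>
     (\<forall>i\<le>d. one_dim_subspace (Suc d) (U i)) \<and>
     (\<forall>v \<in> carrier_vec (Suc d). \<exists>f. (\<forall>i\<le>d. f i \<in> U i) \<and> v = finsum_vec TYPE('a) (Suc d) f {0..d}) \<and>
     (\<forall>f. (\<forall>i\<le>d. f i \<in> U i) \<and> finsum_vec TYPE('a) (Suc d) f {0..d} = 0\<^sub>v (Suc d)
          \<longrightarrow> (\<forall>i\<le>d. f i = 0\<^sub>v (Suc d)))"

definition split_decomposition ::
  "nat \<Rightarrow> 'a::field mat \<Rightarrow> 'a mat \<Rightarrow> (nat \<Rightarrow> 'a) \<Rightarrow> (nat \<Rightarrow> 'a) \<Rightarrow> (nat \<Rightarrow> 'a vec set) \<Rightarrow> bool" where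
  "split_decomposition d A As \<theta> \<theta>s U \<longleftrightarrow> decomposition d U \<and>
     (\<forall>i<d. mat_image (A - \<theta> i \<cdot>\<^sub>m 1\<^sub>m (Suc d)) (U i) = U (Suc i)) \<and>
     mat_image (A - \<theta> d \<cdot>\<^sub>m 1\<^sub>m (Suc d)) (U d) = {0\<^sub>v (Suc d)} \<and>
     (\<forall>i. 1 \<le> i \<and> i \<le> d \<longrightarrow> mat_image (As - \<theta>s i \<cdot>\<^sub>m 1\<^sub>m (Suc d)) (U i) = U (i - 1)) \<and>
     mat_image (As - \<theta>s 0 \<cdot>\<^sub>m 1\<^sub>m (Suc d)) (U 0) = {0\<^sub>v (Suc d)}"

definition leonard_system ::
  "nat \<Rightarrow> 'a::field mat \<Rightarrow> 'a mat \<Rightarrow> (nat \<Rightarrow> 'a) \<Rightarrow> (nat \<Rightarrow> 'a) \<Rightarrow> bool" where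
  "leonard_system d A As \<theta> \<theta>s \<longleftrightarrow>
     (\<forall>i\<le>d. \<forall>j\<le>d.
        (\<bar>int i - int j\<bar> > 1 \<longrightarrow> prim_idem d As \<theta>s i * A * prim_idem d As \<theta>s j = 0\<^sub>m (Suc d) (Suc d)) \<and>
        (\<bar>int i - int j\<bar> = 1 \<longrightarrow> prim_idem d As \<theta>s i * A * prim_idem d As \<theta>s j \<noteq> 0\<^sub>m (Suc d) (Suc d)) \<and>
        (\<bar>int i - int j\<bar> > 1 \<longrightarrow> prim_idem d A \<theta> i * As * prim_idem d A \<theta> j = 0\<^sub>m (Suc d) (Suc d)) \<and>
        (\<bar>int i - int j\<bar> = 1 \<longrightarrow> prim_idem d A \<theta> i * As * prim_idem d A \<theta> j \<noteq> 0\<^sub>m (Suc d) (Suc d)))"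

definition antiautomorphism :: "nat \<Rightarrow> ('a::field mat \<Rightarrow> 'a mat) \<Rightarrow> bool" where
  "antiautomorphism n \<sigma> \<longleftrightarrow> bij_betw \<sigma> (carrier_mat n n) (carrier_mat n n) \<and>
     (\<forall>X \<in> carrier_mat n n. \<forall>Y \<in> carrier_mat n n. \<sigma> (X + Y) = \<sigma> X + \<sigma> Y) \<and>
     (\<forall>c. \<forall>X \<in> carrier_mat n n. \<sigma> (c \<cdot>\<^sub>m X) = c \<cdot>\<^sub>m \<sigma> X) \<and>
     (\<forall>X \<in> carrier_mat n n. \<forall>Y \<in> carrier_mat n n. \<sigma> (X * Y) = \<sigma> Y * \<sigma> X)"

end

theory Submission
  imports Defs
begin

(*
  Let B be the matrix of A in an eigenbasis of A* and B* that of A* in an eigenbasis of A.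
  Since E*_i A E*_j = 0 iff B_ij = 0 (and dually), the sequence is a Leonard system iff B and B*
  are irreducible tridiagonal.

  If they are, a diagonal S with S B^T = B S makes X |-> M X^T M^-1, with M = Q S Q^T for the
  eigenbasis Q of A*, an antiautomorphism fixing A and A*. The vectors
  w_i = (A - theta_(i-1)) ... (A - theta_0) w_0, for w_0 an eigenvector of A* for theta*_0, span a
  split decomposition: their coordinates are upper triangular in the eigenbasis of A* (B is
  irreducible upper Hessenberg) and lower triangular in that of A, so the matrix of A* in the
  basis w is upper triangular with diagonal theta* and, being similar to B* via a lower triangular
  matrix, has upper bandwidth 1 and a nonzero superdiagonal.

  Conversely, in a split basis A is lower and A* upper bidiagonal. The changes of basis to the two
  eigenbases intertwine a triangular matrix with a diagonal one with distinct entries, hence are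
  triangular, which makes B and the transpose of B* irreducible upper Hessenberg. An
  antiautomorphism fixing A and A* fixes all E_i and E*_i, so the zero patterns of B and B* are
  symmetric, and both are tridiagonal.
*)

section \<open>Matrix preliminaries\<close>

lemma mult_carrier_mat_square[simp]:
  "A \<in> carrier_mat n n \<Longrightarrow> B \<in> carrier_mat n n \<Longrightarrow> A * B \<in> carrier_mat n n"
  by auto

lemma shift_carrier_mat[simp]: "X \<in> carrier_mat n n \<Longrightarrow> X - t \<cdot>\<^sub>m 1\<^sub>m n \<in> carrier_mat n n"
  by (simp add: minus_carrier_mat)

lemma mult_mat_vec_carrier_square[simp]:
  "X \<in> carrier_mat n n \<Longrightarrow> v \<in> carrier_vec n \<Longrightarrow> X *\<^sub>v v \<in> carrier_vec n"
  by simp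

lemma dim_mat_diag[simp]: "dim_row (mat_diag n f) = n" "dim_col (mat_diag n f) = n"
  by (simp_all add: mat_diag_def)

lemma index_mat_diag: "i < n \<Longrightarrow> j < n \<Longrightarrow> mat_diag n f $$ (i,j) = (if i = j then f j else 0)"
  by (simp add: mat_diag_def)

lemma index_unit_vec_general[simp]: "j < n \<Longrightarrow> unit_vec n i $ j = (if j = i then 1 else 0)"
  by (simp add: unit_vec_def)

lemma mult_mat_vec_zero: "X \<in> carrier_mat n m \<Longrightarrow> X *\<^sub>v 0\<^sub>v m = (0\<^sub>v n :: 'a::semiring_0 vec)"
  by (auto intro!: eq_vecI simp: scalar_prod_def)

lemma sum_eq_single:
  assumes "finite S" "i \<in> S" "\<And>k. k \<in> S \<Longrightarrow> k \<noteq> i \<Longrightarrow> f k = 0"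
  shows "sum f S = (f i :: 'a::comm_monoid_add)"
  using assms by (subst sum.remove[of S i]) (auto intro!: sum.neutral)

lemma index_mult_mat_vec_single:
  assumes M: "M \<in> carrier_mat n m" and v: "v \<in> carrier_vec m" and i: "i < n" and k: "k < m"
    and others: "\<And>l. l < m \<Longrightarrow> l \<noteq> k \<Longrightarrow> M $$ (i,l) * v $ l = 0"
  shows "(M *\<^sub>v v) $ i = M $$ (i,k) * v $ k"
proof -
  have "(M *\<^sub>v v) $ i = (\<Sum>l\<in>{0..<m}. M $$ (i,l) * v $ l)"
    using M v i by (auto simp: scalar_prod_def intro!: sum.cong)
  also have "\<dots> = M $$ (i,k) * v $ k"
    using k others by (intro sum_eq_single) auto
  finally show ?thesis .
qed

lemma index_mult_mat_single:
  assumes X: "X \<in> carrier_mat n m" and Y: "Y \<in> carrier_mat m l" and i: "i < n" and j: "j < l"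
    and k: "k < m" and others: "\<And>k'. k' < m \<Longrightarrow> k' \<noteq> k \<Longrightarrow> X $$ (i,k') * Y $$ (k',j) = 0"
  shows "(X * Y) $$ (i,j) = X $$ (i,k) * Y $$ (k,j)"
proof -
  have "(X * Y) $$ (i,j) = (X *\<^sub>v col Y j) $ i" using X Y i j by simp
  also have "\<dots> = X $$ (i,k) * Y $$ (k,j)"
    using X Y j k others by (subst index_mult_mat_vec_single[OF X _ i k]) auto
  finally show ?thesis .
qed

lemma smult_mat_mult_vec:
  "A \<in> carrier_mat n m \<Longrightarrow> v \<in> carrier_vec m \<Longrightarrow> (c \<cdot>\<^sub>m A) *\<^sub>v v = c \<cdot>\<^sub>v (A *\<^sub>v (v :: 'a::field vec))"
  by (intro eq_vecI) (auto simp: scalar_prod_def sum_distrib_left ac_simps)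

lemma shift_mult_mat_vec:
  assumes "X \<in> carrier_mat n n" "v \<in> carrier_vec n"
  shows "(X - t \<cdot>\<^sub>m 1\<^sub>m n) *\<^sub>v v = X *\<^sub>v v - t \<cdot>\<^sub>v (v :: 'a::field vec)"
  using assms by (subst minus_mult_distrib_mat_vec[of _ n n]) (auto simp: smult_mat_mult_vec)

lemma shift_mult_mat_vec_eq_iff:
  fixes X :: "'a::field mat"
  assumes X: "X \<in> carrier_mat n n" and v: "v \<in> carrier_vec n" and y: "y \<in> carrier_vec n"
  shows "(X - t \<cdot>\<^sub>m 1\<^sub>m n) *\<^sub>v v = y \<longleftrightarrow> X *\<^sub>v v = t \<cdot>\<^sub>v v + y"
  using X v y by (auto simp: shift_mult_mat_vec vec_eq_iff diff_eq_eq add.commute)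

lemma index_mat_diag_mult_vec:
  fixes v :: "'a::semiring_0 vec"
  assumes "v \<in> carrier_vec n" "j < n"
  shows "(mat_diag n t *\<^sub>v v) $ j = t j * v $ j"
  using assms by (subst index_mult_mat_vec_single[of _ n n _ _ j]) (auto simp: mat_diag_def)

lemma transpose_mat_smult: "transpose_mat (c \<cdot>\<^sub>m A) = c \<cdot>\<^sub>m transpose_mat A"
  by (auto intro!: eq_matI)

lemma transpose_mat_diag: "transpose_mat (mat_diag n f) = mat_diag n f"
  by (auto simp: mat_diag_def intro!: eq_matI)

lemma inverse_mult_col_eq_unit_vec:
  assumes "W \<in> carrier_mat n n" "Wi \<in> carrier_mat n n" "Wi * W = 1\<^sub>m n" "k < n"
  shows "Wi *\<^sub>v col W k = unit_vec n k"
  using assms col_mult2[of Wi n n W n k] by simp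

lemma inverse_mult_vec_cancel:
  fixes x y :: "'a::field vec"
  assumes W: "W \<in> carrier_mat n n" and Wi: "Wi \<in> carrier_mat n n" and W_Wi: "W * Wi = 1\<^sub>m n"
    and x: "x \<in> carrier_vec n" and y: "y \<in> carrier_vec n" and eq: "Wi *\<^sub>v x = Wi *\<^sub>v y"
  shows "x = y"
proof -
  have "x = (W * Wi) *\<^sub>v x" using W_Wi x by simp
  also have "\<dots> = (W * Wi) *\<^sub>v y" using W Wi x y eq by (simp add: assoc_mult_mat_vec[of _ n n _ n])
  finally show ?thesis using W_Wi y by simp
qed

lemma index_conj_mat:
  assumes W: "W \<in> carrier_mat n n" and Wi: "Wi \<in> carrier_mat n n" and X: "X \<in> carrier_mat n n"
    and i: "i < n" and j: "j < n"
  shows "(Wi * X * W) $$ (i,j) = (Wi *\<^sub>v (X *\<^sub>v col W j)) $ i"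
proof -
  have "(Wi * X * W) $$ (i,j) = (Wi * (X * W)) $$ (i,j)" by (simp only: assoc_mult_mat[OF Wi X W])
  also have "\<dots> = row Wi i \<bullet> col (X * W) j" by (rule index_mult_mat(1)) (use Wi X W i j in simp_all)
  also have "col (X * W) j = X *\<^sub>v col W j" by (rule col_mult2[OF X W j])
  finally show ?thesis using Wi i by simp
qed

definition mat_of_col_fun :: "nat \<Rightarrow> (nat \<Rightarrow> 'a vec) \<Rightarrow> 'a mat" where
  "mat_of_col_fun n w = mat n n (\<lambda>(i,j). w j $ i)"

lemma mat_of_col_fun_carrier[simp]: "mat_of_col_fun n w \<in> carrier_mat n n"
  by (simp add: mat_of_col_fun_def)

lemma dim_mat_of_col_fun[simp]: "dim_row (mat_of_col_fun n w) = n" "dim_col (mat_of_col_fun n w) = n"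
  by (simp_all add: mat_of_col_fun_def)

lemma col_mat_of_col_fun: "k < n \<Longrightarrow> w k \<in> carrier_vec n \<Longrightarrow> col (mat_of_col_fun n w) k = w k"
  by (auto simp: mat_of_col_fun_def intro!: eq_vecI)

lemma finsum_vec_eq_mult_mat_of_col_fun:
  assumes u: "\<And>i. i \<le> d \<Longrightarrow> u i \<in> carrier_vec (Suc d)" and a: "a \<in> carrier_vec (Suc d)"
    and f: "\<And>i. i \<le> d \<Longrightarrow> f i = a $ i \<cdot>\<^sub>v u i"
  shows "finsum_vec TYPE('a::field) (Suc d) f {0..d} = mat_of_col_fun (Suc d) u *\<^sub>v a"
proof (rule eq_vecI)
  have fc: "f \<in> {0..d} \<rightarrow> carrier_vec (Suc d)" using u f by auto
  fix r assume "r < dim_vec (mat_of_col_fun (Suc d) u *\<^sub>v a)"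
  then have r: "r < Suc d" by (simp add: mat_of_col_fun_def)
  have "finsum_vec TYPE('a) (Suc d) f {0..d} $ r = (\<Sum>i\<in>{0..d}. f i $ r)"
    by (rule index_finsum_vec[OF _ r fc]) simp
  also have "\<dots> = (\<Sum>i\<in>{0..<Suc d}. mat_of_col_fun (Suc d) u $$ (r,i) * a $ i)"
  proof (rule sum.cong)
    fix i assume "i \<in> {0..<Suc d}"
    then have "i \<le> d" by simp
    then show "f i $ r = mat_of_col_fun (Suc d) u $$ (r,i) * a $ i"
      using f[of i] u[of i] r by (simp add: mat_of_col_fun_def mult.commute)
  qed auto
  also have "\<dots> = (mat_of_col_fun (Suc d) u *\<^sub>v a) $ r"
    using a r by (auto simp: scalar_prod_def mat_of_col_fun_def ac_simps intro!: sum.cong)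
  finally show "finsum_vec TYPE('a) (Suc d) f {0..d} $ r = (mat_of_col_fun (Suc d) u *\<^sub>v a) $ r" .
next
  have "f \<in> {0..d} \<rightarrow> carrier_vec (Suc d)" using u f by auto
  then have "finsum_vec TYPE('a) (Suc d) f {0..d} \<in> carrier_vec (Suc d)"
    by (rule finsum_vec_closed)
  then show "dim_vec (finsum_vec TYPE('a) (Suc d) f {0..d}) = dim_vec (mat_of_col_fun (Suc d) u *\<^sub>v a)"
    by (simp add: mat_of_col_fun_def)
qed

section \<open>Band matrices\<close>

definition lower_bandwidth_le :: "nat \<Rightarrow> 'a::zero mat \<Rightarrow> bool" where
  "lower_bandwidth_le s M \<longleftrightarrow>
     (\<forall>i j. i < dim_row M \<longrightarrow> j < dim_col M \<longrightarrow> j + s < i \<longrightarrow> M $$ (i,j) = 0)"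

definition upper_bandwidth_le :: "nat \<Rightarrow> 'a::zero mat \<Rightarrow> bool" where
  "upper_bandwidth_le s M \<longleftrightarrow>
     (\<forall>i j. i < dim_row M \<longrightarrow> j < dim_col M \<longrightarrow> i + s < j \<longrightarrow> M $$ (i,j) = 0)"

lemma upper_bandwidth_le_iff_transpose:
  "upper_bandwidth_le s M \<longleftrightarrow> lower_bandwidth_le s (transpose_mat M)"
  unfolding upper_bandwidth_le_def lower_bandwidth_le_def by auto

lemma lower_bandwidth_le_0_iff_upper_triangular:
  "M \<in> carrier_mat n n \<Longrightarrow> lower_bandwidth_le 0 M \<longleftrightarrow> upper_triangular M"
  unfolding lower_bandwidth_le_def upper_triangular_def by auto

lemma lower_bandwidth_le_mat_diag: "lower_bandwidth_le s (mat_diag n t)"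
  unfolding lower_bandwidth_le_def by (simp add: mat_diag_def)

lemma lower_bandwidth_le_shift:
  fixes M :: "'a::ring_1 mat"
  assumes "M \<in> carrier_mat n n" "lower_bandwidth_le s M"
  shows "lower_bandwidth_le s (M - c \<cdot>\<^sub>m 1\<^sub>m n)"
  using assms unfolding lower_bandwidth_le_def by auto

lemma lower_bandwidth_mult_vec:
  fixes M :: "'a::semiring_0 mat"
  assumes M: "M \<in> carrier_mat n n" and band: "lower_bandwidth_le s M" and v: "v \<in> carrier_vec n"
    and v_zero: "\<And>j. m < j \<Longrightarrow> j < n \<Longrightarrow> v $ j = 0"
  shows "\<And>j. m + s < j \<Longrightarrow> j < n \<Longrightarrow> (M *\<^sub>v v) $ j = 0"
    and "m + s < n \<Longrightarrow> (M *\<^sub>v v) $ (m + s) = M $$ (m + s, m) * v $ m"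
proof -
  have M_zero: "M $$ (i,l) = 0" if "l + s < i" "i < n" "l < n" for i l
    using band M that unfolding lower_bandwidth_le_def by auto
  show "(M *\<^sub>v v) $ j = 0" if j: "m + s < j" "j < n" for j
  proof -
    have "(M *\<^sub>v v) $ j = (\<Sum>l\<in>{0..<n}. M $$ (j,l) * v $ l)"
      using M v j by (auto simp: scalar_prod_def intro!: sum.cong)
    also have "\<dots> = 0"
    proof (intro sum.neutral ballI)
      fix l assume "l \<in> {0..<n}"
      then show "M $$ (j,l) * v $ l = 0"
        using v_zero[of l] M_zero[of l j] j by (cases "m < l") auto
    qed
    finally show ?thesis .
  qed
  show "(M *\<^sub>v v) $ (m + s) = M $$ (m + s, m) * v $ m" if "m + s < n"
    using that v_zero M_zero by (intro index_mult_mat_vec_single[OF M v]) (auto simp: nat_neq_iff)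
qed

lemma lower_bandwidth_mult:
  fixes X Y :: "'a::semiring_0 mat"
  assumes X: "X \<in> carrier_mat n n" and Y: "Y \<in> carrier_mat n n"
    and bX: "lower_bandwidth_le s X" and bY: "lower_bandwidth_le t Y"
  shows "lower_bandwidth_le (s + t) (X * Y)"
    and "k + t + s < n \<Longrightarrow> (X * Y) $$ (k + t + s, k) = X $$ (k + t + s, k + t) * Y $$ (k + t, k)"
proof -
  have col_zero: "\<And>j. k + t < j \<Longrightarrow> j < n \<Longrightarrow> col Y k $ j = 0" if "k < n" for k
    using bY Y that unfolding lower_bandwidth_le_def by auto
  have colY: "col Y k \<in> carrier_vec n" for k using Y by auto
  note vec = lower_bandwidth_mult_vec[OF X bX colY]
  show "lower_bandwidth_le (s + t) (X * Y)"
    unfolding lower_bandwidth_le_def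
  proof (intro allI impI)
    fix i k assume i: "i < dim_row (X * Y)" and k: "k < dim_col (X * Y)" and ki: "k + (s + t) < i"
    have kn: "k < n" using k Y by simp
    have "(X *\<^sub>v col Y k) $ i = 0" by (rule vec(1)[OF col_zero[OF kn]]) (use i ki X in auto)
    then show "(X * Y) $$ (i,k) = 0" using i k X Y by simp
  qed
  show "(X * Y) $$ (k + t + s, k) = X $$ (k + t + s, k + t) * Y $$ (k + t, k)" if "k + t + s < n"
  proof -
    have kn: "k < n" using that by simp
    show ?thesis using vec(2)[OF col_zero[OF kn]] that X Y by simp
  qed
qed

lemma lower_bandwidth_conj:
  fixes S M S' :: "'a::semiring_0 mat"
  assumes S: "S \<in> carrier_mat n n" and M: "M \<in> carrier_mat n n" and S': "S' \<in> carrier_mat n n"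
    and bS: "lower_bandwidth_le 0 S" and bM: "lower_bandwidth_le s M" and bS': "lower_bandwidth_le 0 S'"
  shows "lower_bandwidth_le s (S * M * S')"
    and "k + s < n \<Longrightarrow> (S * M * S') $$ (k + s, k) = S $$ (k + s, k + s) * M $$ (k + s, k) * S' $$ (k, k)"
proof -
  have SM: "S * M \<in> carrier_mat n n" using S M by simp
  note first = lower_bandwidth_mult[OF S M bS bM]
  have bSM: "lower_bandwidth_le s (S * M)" using first(1) by simp
  note second = lower_bandwidth_mult[OF SM S' bSM bS']
  show "lower_bandwidth_le s (S * M * S')" using second(1) by simp
  show "(S * M * S') $$ (k + s, k) = S $$ (k + s, k + s) * M $$ (k + s, k) * S' $$ (k, k)"
    if "k + s < n" using first(2)[of k] second(2)[of k] that by simp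
qed

lemma upper_triangular_inverse:
  fixes T Ti :: "'a::field mat"
  assumes T: "T \<in> carrier_mat n n" and Ti: "Ti \<in> carrier_mat n n" and inv: "Ti * T = 1\<^sub>m n"
    and bT: "lower_bandwidth_le 0 T"
  shows "lower_bandwidth_le 0 Ti" and "j < n \<Longrightarrow> Ti $$ (j,j) * T $$ (j,j) = 1"
proof -
  have "det Ti * det T = 1" using det_mult[OF Ti T] inv by simp
  then have "det T \<noteq> 0" by (metis mult_zero_right zero_neq_one)
  moreover have "det T = prod_list (diag_mat T)"
    using det_upper_triangular[OF _ T] lower_bandwidth_le_0_iff_upper_triangular[OF T] bT by simp
  ultimately have "0 \<notin> set (diag_mat T)" by (simp add: prod_list_zero_iff)
  then have diag: "T $$ (j,j) \<noteq> 0" if "j < n" for j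
    using that T by (auto simp: diag_mat_def)
  have T_zero: "T $$ (k,j) = 0" if "j < k" "k < n" "j < n" for j k
    using bT T that unfolding lower_bandwidth_le_def by auto
  have "\<forall>i. j < i \<longrightarrow> i < n \<longrightarrow> Ti $$ (i,j) = 0" for j
  proof (induction j rule: less_induct)
    case (less j)
    show ?case
    proof (intro allI impI)
      fix i assume i: "j < i" "i < n"
      have "Ti $$ (i,j) * T $$ (j,j) = (Ti * T) $$ (i,j)"
        using less i T_zero by (intro index_mult_mat_single[OF Ti T, symmetric]) (auto simp: nat_neq_iff)
      also have "\<dots> = 0" using inv i by simp
      finally show "Ti $$ (i,j) = 0" using diag i by simp
    qed
  qed
  then show bTi: "lower_bandwidth_le 0 Ti"
    using Ti unfolding lower_bandwidth_le_def by auto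
  show "Ti $$ (j,j) * T $$ (j,j) = 1" if "j < n"
    using lower_bandwidth_mult(2)[OF Ti T bTi bT, of j] inv that by simp
qed

lemma lower_triangular_inverse:
  fixes T Ti :: "'a::field mat"
  assumes T: "T \<in> carrier_mat n n" and Ti: "Ti \<in> carrier_mat n n" and inv: "T * Ti = 1\<^sub>m n"
    and bT: "upper_bandwidth_le 0 T"
  shows "upper_bandwidth_le 0 Ti" and "j < n \<Longrightarrow> Ti $$ (j,j) * T $$ (j,j) = 1"
proof -
  have inv': "transpose_mat Ti * transpose_mat T = 1\<^sub>m n"
    using inv transpose_mult[OF T Ti] by simp
  note tri = upper_triangular_inverse[OF transpose_carrier_mat[THEN iffD2, OF T]
      transpose_carrier_mat[THEN iffD2, OF Ti] inv']
  show "upper_bandwidth_le 0 Ti"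
    using tri(1) bT by (simp add: upper_bandwidth_le_iff_transpose)
  show "Ti $$ (j,j) * T $$ (j,j) = 1" if "j < n"
    using tri(2)[of j] that T Ti bT by (simp add: upper_bandwidth_le_iff_transpose mult.commute)
qed

lemma intertwining_upper_triangular:
  fixes X R1 R2 :: "'a::idom mat"
  assumes X: "X \<in> carrier_mat n n" and R1: "R1 \<in> carrier_mat n n" and R2: "R2 \<in> carrier_mat n n"
    and b1: "lower_bandwidth_le 0 R1" and b2: "lower_bandwidth_le 0 R2"
    and distinct: "\<And>i j. j < i \<Longrightarrow> i < n \<Longrightarrow> R1 $$ (i,i) \<noteq> R2 $$ (j,j)"
    and comm: "R1 * X = X * R2"
  shows "lower_bandwidth_le 0 X"
proof -
  have R1_zero: "R1 $$ (i,k) = 0" if "k < i" "i < n" for i k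
    using b1 R1 that unfolding lower_bandwidth_le_def by auto
  have R2_zero: "R2 $$ (k,j) = 0" if "j < k" "k < n" for j k
    using b2 R2 that unfolding lower_bandwidth_le_def by auto
  have "\<forall>i. j < i \<longrightarrow> i < n \<longrightarrow> X $$ (i,j) = 0" for j
  proof (induction j rule: less_induct)
    case (less j)
    note left_cols = less.IH
    have "X $$ (i,j) = 0" if "j < i" "i < n" for i
      using that
    proof (induction "n - i" arbitrary: i rule: less_induct)
      case (less i)
      have "R1 $$ (i,i) * X $$ (i,j) = (R1 * X) $$ (i,j)"
        using less R1_zero by (intro index_mult_mat_single[OF R1 X, symmetric]) (auto simp: nat_neq_iff)
      also have "\<dots> = (X * R2) $$ (i,j)" using comm by simp
      also have "\<dots> = X $$ (i,j) * R2 $$ (j,j)"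
        using less left_cols R2_zero by (intro index_mult_mat_single[OF X R2]) (auto simp: nat_neq_iff)
      finally have "(R1 $$ (i,i) - R2 $$ (j,j)) * X $$ (i,j) = 0" by (simp add: algebra_simps)
      then show ?case using distinct[of j i] less.prems by simp
    qed
    then show ?case by blast
  qed
  then show ?thesis using X unfolding lower_bandwidth_le_def by auto
qed

definition irreducible_upper_hessenberg :: "'a::zero mat \<Rightarrow> bool" where
  "irreducible_upper_hessenberg M \<longleftrightarrow>
     lower_bandwidth_le 1 M \<and> (\<forall>k. Suc k < dim_row M \<longrightarrow> M $$ (Suc k, k) \<noteq> 0)"

lemma irreducible_upper_hessenberg_triangular_conj:
  fixes S M S' :: "'a::field mat"
  assumes S: "S \<in> carrier_mat n n" and M: "M \<in> carrier_mat n n" and S': "S' \<in> carrier_mat n n"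
    and bS: "lower_bandwidth_le 0 S" and bS': "lower_bandwidth_le 0 S'"
    and dS: "\<And>k. k < n \<Longrightarrow> S $$ (k,k) \<noteq> 0" and dS': "\<And>k. k < n \<Longrightarrow> S' $$ (k,k) \<noteq> 0"
    and hM: "irreducible_upper_hessenberg M"
  shows "irreducible_upper_hessenberg (S * M * S')"
proof -
  have bM: "lower_bandwidth_le 1 M" using hM by (simp add: irreducible_upper_hessenberg_def)
  note conj = lower_bandwidth_conj[OF S M S' bS bM bS']
  have "(S * M * S') $$ (Suc k, k) \<noteq> 0" if "Suc k < n" for k
    using conj(2)[of k] that dS dS' hM M by (simp add: irreducible_upper_hessenberg_def)
  then show ?thesis using conj(1) S by (simp add: irreducible_upper_hessenberg_def)
qed

lemma triangular_conj_mat_diag: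
  fixes S Si :: "'a::field mat"
  assumes S: "S \<in> carrier_mat n n" and Si: "Si \<in> carrier_mat n n"
    and bS: "lower_bandwidth_le 0 S" and bSi: "lower_bandwidth_le 0 Si"
    and inv: "\<And>k. k < n \<Longrightarrow> Si $$ (k,k) * S $$ (k,k) = 1"
  shows "lower_bandwidth_le 0 (Si * mat_diag n t * S)"
    and "k < n \<Longrightarrow> (Si * mat_diag n t * S) $$ (k,k) = t k"
proof -
  note conj = lower_bandwidth_conj[OF Si mat_diag_dim S bSi lower_bandwidth_le_mat_diag bS]
  show "lower_bandwidth_le 0 (Si * mat_diag n t * S)" by (rule conj(1))
  show "(Si * mat_diag n t * S) $$ (k,k) = t k" if "k < n"
    using conj(2)[where s = 0 and k = k] inv[OF that] that
    by (simp add: index_mat_diag algebra_simps)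
qed

lemma irreducible_upper_hessenberg_similar:
  fixes S Si M :: "'a::field mat"
  assumes S: "S \<in> carrier_mat n n" and Si: "Si \<in> carrier_mat n n" and M: "M \<in> carrier_mat n n"
    and Si_S: "Si * S = 1\<^sub>m n" and tri: "lower_bandwidth_le 0 S"
    and hess: "irreducible_upper_hessenberg M"
  shows "irreducible_upper_hessenberg (S * M * Si)"
proof -
  note inv = upper_triangular_inverse[OF S Si Si_S tri]
  have diag: "S $$ (k,k) \<noteq> 0 \<and> Si $$ (k,k) \<noteq> 0" if "k < n" for k
    using inv(2)[OF that] by (metis mult_zero_left mult_zero_right zero_neq_one)
  show ?thesis
    using diag inv(1) tri by (intro irreducible_upper_hessenberg_triangular_conj[OF S M Si _ _ _ _ hess]) auto
qed

lemma irreducible_upper_hessenberg_transpose_similar: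
  fixes S Si M :: "'a::field mat"
  assumes S: "S \<in> carrier_mat n n" and Si: "Si \<in> carrier_mat n n" and M: "M \<in> carrier_mat n n"
    and S_Si: "S * Si = 1\<^sub>m n" and tri: "upper_bandwidth_le 0 S"
    and hess: "irreducible_upper_hessenberg (transpose_mat M)"
  shows "irreducible_upper_hessenberg (transpose_mat (S * M * Si))"
proof -
  have "transpose_mat (S * M * Si) = transpose_mat Si * transpose_mat M * transpose_mat S"
    using S M Si by (simp add: transpose_mult[of _ n n _ n] assoc_mult_mat[of _ n n _ n _ n])
  moreover have "transpose_mat S * transpose_mat Si = 1\<^sub>m n"
    using transpose_mult[OF Si S] mat_mult_left_right_inverse[OF S Si S_Si] by simp
  moreover have "lower_bandwidth_le 0 (transpose_mat Si)"
    using lower_triangular_inverse(1)[OF S Si S_Si tri] by (simp add: upper_bandwidth_le_iff_transpose)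
  ultimately show ?thesis
    using irreducible_upper_hessenberg_similar[of "transpose_mat Si" n "transpose_mat S" "transpose_mat M"]
      S Si M hess by simp
qed

definition irreducible_tridiagonal :: "'a::zero mat \<Rightarrow> bool" where
  "irreducible_tridiagonal M \<longleftrightarrow> lower_bandwidth_le 1 M \<and> upper_bandwidth_le 1 M \<and>
     (\<forall>j. Suc j < dim_row M \<longrightarrow> M $$ (Suc j, j) \<noteq> 0 \<and> M $$ (j, Suc j) \<noteq> 0)"

lemma irreducible_tridiagonal_iff_hessenberg:
  "M \<in> carrier_mat n n \<Longrightarrow> irreducible_tridiagonal M \<longleftrightarrow>
     irreducible_upper_hessenberg M \<and> irreducible_upper_hessenberg (transpose_mat M)"
  unfolding irreducible_tridiagonal_def irreducible_upper_hessenberg_def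
  by (auto simp: upper_bandwidth_le_iff_transpose)

lemma irreducible_tridiagonal_transpose:
  "M \<in> carrier_mat n n \<Longrightarrow> irreducible_tridiagonal (transpose_mat M) \<longleftrightarrow> irreducible_tridiagonal M"
  unfolding irreducible_tridiagonal_def by (auto simp: upper_bandwidth_le_iff_transpose)

lemma irreducible_tridiagonal_if_zero_pattern_symmetric:
  assumes M: "M \<in> carrier_mat n n" and hess: "irreducible_upper_hessenberg M"
    and sym: "\<And>i j. i < n \<Longrightarrow> j < n \<Longrightarrow> M $$ (i,j) = 0 \<longleftrightarrow> M $$ (j,i) = 0"
  shows "irreducible_tridiagonal M"
proof -
  have band: "lower_bandwidth_le 1 M" using hess by (simp add: irreducible_upper_hessenberg_def)
  have "upper_bandwidth_le 1 M"
    unfolding upper_bandwidth_le_def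
  proof (intro allI impI)
    fix i j assume "i < dim_row M" "j < dim_col M" "i + 1 < j"
    then show "M $$ (i,j) = 0" using band sym[of i j] M unfolding lower_bandwidth_le_def by auto
  qed
  then show ?thesis
    using band hess sym M unfolding irreducible_tridiagonal_def irreducible_upper_hessenberg_def by auto
qed

lemma irreducible_tridiagonal_if_transpose_zero_pattern_symmetric:
  assumes M: "M \<in> carrier_mat n n" and hess: "irreducible_upper_hessenberg (transpose_mat M)"
    and sym: "\<And>i j. i < n \<Longrightarrow> j < n \<Longrightarrow> M $$ (i,j) = 0 \<longleftrightarrow> M $$ (j,i) = 0"
  shows "irreducible_tridiagonal M"
proof -
  have "irreducible_tridiagonal (transpose_mat M)"
    using M sym by (intro irreducible_tridiagonal_if_zero_pattern_symmetric[OF _ hess]) auto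
  then show ?thesis using irreducible_tridiagonal_transpose[OF M] by simp
qed

fun tridiagonal_symmetrizer :: "'a::field mat \<Rightarrow> nat \<Rightarrow> 'a" where
  "tridiagonal_symmetrizer B 0 = 1"
| "tridiagonal_symmetrizer B (Suc i) = tridiagonal_symmetrizer B i * B $$ (Suc i, i) / B $$ (i, Suc i)"

lemma tridiagonal_symmetrizer_nonzero:
  "irreducible_tridiagonal B \<Longrightarrow> i < dim_row B \<Longrightarrow> tridiagonal_symmetrizer B i \<noteq> 0"
  by (induction i) (auto simp: irreducible_tridiagonal_def)

lemma tridiagonal_symmetrizer_commute:
  fixes B :: "'a::field mat"
  assumes B: "B \<in> carrier_mat n n" and tri: "irreducible_tridiagonal B"
  shows "mat_diag n (tridiagonal_symmetrizer B) * transpose_mat B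
       = B * mat_diag n (tridiagonal_symmetrizer B)"
proof -
  let ?s = "tridiagonal_symmetrizer B"
  have "?s i * B $$ (j,i) = B $$ (i,j) * ?s j" if ij: "i < n" "j < n" for i j
  proof -
    consider "Suc j < i \<or> Suc i < j" | "i = j" | "i = Suc j" | "j = Suc i" by linarith
    then show ?thesis
    proof cases
      case 1
      then show ?thesis using tri B ij
        unfolding irreducible_tridiagonal_def lower_bandwidth_le_def upper_bandwidth_le_def by auto
    next
      case 3
      then show ?thesis using tri B ij unfolding irreducible_tridiagonal_def by auto
    next
      case 4
      then show ?thesis using tri B ij unfolding irreducible_tridiagonal_def by auto
    qed simp
  qed
  then show ?thesis
    using B by (auto simp: mat_diag_mult_left[of _ n n] mat_diag_mult_right[of _ n n] intro!: eq_matI)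
qed

section \<open>Primitive idempotents\<close>

lemma shift_product_carrier:
  "X \<in> carrier_mat n n \<Longrightarrow>
   foldr (\<lambda>j M. (c j \<cdot>\<^sub>m (X - t j \<cdot>\<^sub>m 1\<^sub>m n)) * M) js (1\<^sub>m n) \<in> carrier_mat n n"
  by (induction js) (auto simp: minus_carrier_mat)

lemma shift_product_mult_eigenvector:
  fixes X :: "'a::field mat"
  assumes X: "X \<in> carrier_mat n n" and v: "v \<in> carrier_vec n" and eig: "X *\<^sub>v v = l \<cdot>\<^sub>v v"
  shows "foldr (\<lambda>j M. (c j \<cdot>\<^sub>m (X - t j \<cdot>\<^sub>m 1\<^sub>m n)) * M) js (1\<^sub>m n) *\<^sub>v v
      = prod_list (map (\<lambda>j. c j * (l - t j)) js) \<cdot>\<^sub>v v"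
proof (induction js)
  case (Cons j js)
  let ?M = "foldr (\<lambda>j M. (c j \<cdot>\<^sub>m (X - t j \<cdot>\<^sub>m 1\<^sub>m n)) * M) js (1\<^sub>m n)"
  let ?F = "c j \<cdot>\<^sub>m (X - t j \<cdot>\<^sub>m 1\<^sub>m n)"
  have M: "?M \<in> carrier_mat n n" using shift_product_carrier[OF X] .
  have F: "?F \<in> carrier_mat n n" using X by (simp add: minus_carrier_mat)
  have "?F *\<^sub>v v = c j \<cdot>\<^sub>v (X *\<^sub>v v - t j \<cdot>\<^sub>v v)"
    using X v by (simp add: smult_mat_mult_vec[of _ n n] shift_mult_mat_vec minus_carrier_mat)
  also have "\<dots> = (c j * (l - t j)) \<cdot>\<^sub>v v"
    unfolding eig using v by (auto intro!: eq_vecI simp: algebra_simps)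
  finally have F_v: "?F *\<^sub>v v = (c j * (l - t j)) \<cdot>\<^sub>v v" .
  have "(?F * ?M) *\<^sub>v v = ?F *\<^sub>v (?M *\<^sub>v v)" using M F v by auto
  also have "\<dots> = prod_list (map (\<lambda>j. c j * (l - t j)) js) \<cdot>\<^sub>v (?F *\<^sub>v v)"
    using Cons F v by (simp add: mult_mat_vec)
  also have "\<dots> = prod_list (map (\<lambda>j. c j * (l - t j)) (j # js)) \<cdot>\<^sub>v v"
    using F_v by (simp add: smult_smult_assoc ac_simps)
  finally show ?case by simp
qed (use v in auto)

lemma prim_idem_carrier:
  "X \<in> carrier_mat (Suc d) (Suc d) \<Longrightarrow> prim_idem d X t i \<in> carrier_mat (Suc d) (Suc d)"
  unfolding prim_idem_def by (rule shift_product_carrier)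

lemma prim_idem_mult_eigenvector:
  fixes X :: "'a::field mat"
  assumes X: "X \<in> carrier_mat (Suc d) (Suc d)" and v: "v \<in> carrier_vec (Suc d)"
    and eig: "X *\<^sub>v v = t k \<cdot>\<^sub>v v" and inj: "inj_on t {0..d}" and k: "k \<le> d" and i: "i \<le> d"
  shows "prim_idem d X t i *\<^sub>v v = (if k = i then v else 0\<^sub>v (Suc d))"
proof -
  let ?js = "filter (\<lambda>j. j \<noteq> i) [0..<Suc d]"
  let ?c = "prod_list (map (\<lambda>j. inverse (t i - t j) * (t k - t j)) ?js)"
  have "prim_idem d X t i *\<^sub>v v = ?c \<cdot>\<^sub>v v"
    unfolding prim_idem_def by (rule shift_product_mult_eigenvector[OF X v eig])
  moreover have "?c = (if k = i then 1 else 0)"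
  proof (cases "k = i")
    case True
    have "t i \<noteq> t j" if "j \<le> d" "j \<noteq> i" for j
      using inj i that by (auto dest: inj_onD)
    then show ?thesis using True by (auto intro!: prod_list_neutral simp del: upt_Suc)
  next
    case False
    then have "0 \<in> set (map (\<lambda>j. inverse (t i - t j) * (t k - t j)) ?js)"
      using k by (auto simp del: upt_Suc intro!: image_eqI[of _ _ k])
    then show ?thesis using False by (simp add: prod_list_zero_iff)
  qed
  ultimately show ?thesis using v by auto
qed

lemma diagonalizing_col_eigenvector:
  fixes X P :: "'a::comm_semiring_0 mat"
  assumes X: "X \<in> carrier_mat n n" and P: "P \<in> carrier_mat n n"
    and X_P: "X * P = P * mat_diag n t" and k: "k < n"
  shows "X *\<^sub>v col P k = t k \<cdot>\<^sub>v col P k"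
proof -
  have "X *\<^sub>v col P k = col (X * P) k" by (rule col_mult2[OF X P k, symmetric])
  also have "\<dots> = t k \<cdot>\<^sub>v col P k"
    unfolding X_P mat_diag_mult_right[OF P] using P k by (auto simp: mult.commute intro!: eq_vecI)
  finally show ?thesis .
qed

lemma prim_idem_mult_diagonalizing:
  fixes X P :: "'a::field mat"
  assumes X: "X \<in> carrier_mat (Suc d) (Suc d)" and P: "P \<in> carrier_mat (Suc d) (Suc d)"
    and X_P: "X * P = P * mat_diag (Suc d) t" and inj: "inj_on t {0..d}" and i: "i \<le> d"
  shows "prim_idem d X t i * P = P * mat_diag (Suc d) (\<lambda>k. if k = i then 1 else 0)"
proof (rule eq_matI)
  fix r k assume "r < dim_row (P * mat_diag (Suc d) (\<lambda>k. if k = i then 1 else 0))"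
    "k < dim_col (P * mat_diag (Suc d) (\<lambda>k. if k = i then 1 else 0))"
  then have rk: "r < Suc d" "k < Suc d" using P by auto
  have "(prim_idem d X t i * P) $$ (r,k) = (prim_idem d X t i *\<^sub>v col P k) $ r"
    using prim_idem_carrier[OF X, of t i] P rk by simp
  also have "\<dots> = (if k = i then col P k else 0\<^sub>v (Suc d)) $ r"
    using prim_idem_mult_eigenvector[OF X _ diagonalizing_col_eigenvector[OF X P X_P] inj _ i] P rk
    by simp
  finally show "(prim_idem d X t i * P) $$ (r,k)
      = (P * mat_diag (Suc d) (\<lambda>k. if k = i then 1 else 0)) $$ (r,k)"
    using P rk by (simp add: mat_diag_mult_right[OF P])
qed (use P prim_idem_carrier[OF X, of t i] in auto)

section \<open>Antiautomorphisms\<close>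

lemma antiautomorphism_conj_transpose:
  fixes M Mi :: "'a::field mat"
  assumes M: "M \<in> carrier_mat n n" and Mi: "Mi \<in> carrier_mat n n"
    and M_Mi: "M * Mi = 1\<^sub>m n" and Mi_M: "Mi * M = 1\<^sub>m n"
  shows "antiautomorphism n (\<lambda>X. M * transpose_mat X * Mi)"
proof -
  note assoc = assoc_mult_mat[of _ n n _ n _ n]
  define \<sigma> where "\<sigma> = (\<lambda>X. M * transpose_mat X * Mi)"
  define \<tau> where "\<tau> = (\<lambda>Y. transpose_mat (Mi * Y * M))"
  have \<tau>_\<sigma>: "\<tau> (\<sigma> X) = X" if X: "X \<in> carrier_mat n n" for X
  proof -
    have "Mi * (M * transpose_mat X * Mi) * M = (Mi * M) * transpose_mat X * (Mi * M)"
      using X M Mi by (simp add: assoc)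
    then show ?thesis using Mi_M X by (simp add: \<sigma>_def \<tau>_def)
  qed
  have \<sigma>_\<tau>: "\<sigma> (\<tau> Y) = Y" if Y: "Y \<in> carrier_mat n n" for Y
  proof -
    have "M * (Mi * Y * M) * Mi = (M * Mi) * Y * (M * Mi)"
      using Y M Mi by (simp add: assoc)
    then show ?thesis using M_Mi Y by (simp add: \<sigma>_def \<tau>_def)
  qed
  have "\<sigma> X \<in> carrier_mat n n" "\<tau> X \<in> carrier_mat n n" if "X \<in> carrier_mat n n" for X
    using that M Mi by (simp_all add: \<sigma>_def \<tau>_def)
  then have bij: "bij_betw \<sigma> (carrier_mat n n) (carrier_mat n n)"
    using \<tau>_\<sigma> \<sigma>_\<tau> by (intro bij_betw_byWitness[where f' = \<tau>]) auto
  have add: "\<sigma> (X + Y) = \<sigma> X + \<sigma> Y" if "X \<in> carrier_mat n n" "Y \<in> carrier_mat n n" for X Y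
    using that M Mi by (simp add: \<sigma>_def transpose_add mult_add_distrib_mat[of _ n n _ n]
        add_mult_distrib_mat[of _ n n _ _ n])
  have smult: "\<sigma> (c \<cdot>\<^sub>m X) = c \<cdot>\<^sub>m \<sigma> X" if X: "X \<in> carrier_mat n n" for c X
  proof -
    have "M * (c \<cdot>\<^sub>m transpose_mat X) = c \<cdot>\<^sub>m (M * transpose_mat X)"
      by (rule mult_smult_distrib[OF M]) (use X in simp)
    moreover have "(c \<cdot>\<^sub>m (M * transpose_mat X)) * Mi = c \<cdot>\<^sub>m (M * transpose_mat X * Mi)"
      by (rule mult_smult_assoc_mat[of _ n n Mi n]) (use X M Mi in simp_all)
    ultimately show ?thesis by (simp add: \<sigma>_def transpose_mat_smult)
  qed
  have mult: "\<sigma> (X * Y) = \<sigma> Y * \<sigma> X" if X: "X \<in> carrier_mat n n" and Y: "Y \<in> carrier_mat n n" for X Y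
  proof -
    have "\<sigma> Y * \<sigma> X = M * transpose_mat Y * (Mi * M) * transpose_mat X * Mi"
      using X Y M Mi by (simp add: \<sigma>_def assoc)
    also have "\<dots> = M * (transpose_mat Y * transpose_mat X) * Mi"
      using Mi_M X Y M Mi by (simp add: assoc)
    also have "\<dots> = \<sigma> (X * Y)" using X Y by (simp add: \<sigma>_def transpose_mult[of _ n n _ n])
    finally show ?thesis by simp
  qed
  show ?thesis
    using bij add smult mult unfolding antiautomorphism_def \<sigma>_def by blast
qed

lemma congruence_inverse:
  fixes Q Qi S Si :: "'a::comm_ring_1 mat"
  assumes Q: "Q \<in> carrier_mat n n" and Qi: "Qi \<in> carrier_mat n n"
    and Q_Qi: "Q * Qi = 1\<^sub>m n" and Qi_Q: "Qi * Q = 1\<^sub>m n"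
    and S: "S \<in> carrier_mat n n" and Si: "Si \<in> carrier_mat n n"
    and S_Si: "S * Si = 1\<^sub>m n" and Si_S: "Si * S = 1\<^sub>m n"
  shows "(Q * S * transpose_mat Q) * (transpose_mat Qi * Si * Qi) = 1\<^sub>m n"
    and "(transpose_mat Qi * Si * Qi) * (Q * S * transpose_mat Q) = 1\<^sub>m n"
proof -
  note assoc = assoc_mult_mat[of _ n n _ n _ n]
  have QtQit: "transpose_mat Q * transpose_mat Qi = 1\<^sub>m n" using transpose_mult[OF Qi Q] Qi_Q by simp
  have "(Q * S * transpose_mat Q) * (transpose_mat Qi * Si * Qi)
      = Q * S * (transpose_mat Q * transpose_mat Qi) * Si * Qi"
    using Q Qi S Si by (simp add: assoc)
  also have "\<dots> = Q * (S * Si) * Qi" using QtQit Q Qi S Si by (simp add: assoc)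
  finally show "(Q * S * transpose_mat Q) * (transpose_mat Qi * Si * Qi) = 1\<^sub>m n"
    using S_Si Q_Qi Q Qi by simp
  have QitQt: "transpose_mat Qi * transpose_mat Q = 1\<^sub>m n" using transpose_mult[OF Q Qi] Q_Qi by simp
  have "(transpose_mat Qi * Si * Qi) * (Q * S * transpose_mat Q)
      = transpose_mat Qi * Si * (Qi * Q) * S * transpose_mat Q"
    using Q Qi S Si by (simp add: assoc)
  also have "\<dots> = transpose_mat Qi * (Si * S) * transpose_mat Q" using Qi_Q Q Qi S Si by (simp add: assoc)
  finally show "(transpose_mat Qi * Si * Qi) * (Q * S * transpose_mat Q) = 1\<^sub>m n"
    using Si_S QitQt Q Qi by simp
qed

lemma congruence_commute_transpose:
  fixes Q Qi S B :: "'a::comm_ring_1 mat"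
  assumes Q: "Q \<in> carrier_mat n n" and Qi: "Qi \<in> carrier_mat n n" and Qi_Q: "Qi * Q = 1\<^sub>m n"
    and S: "S \<in> carrier_mat n n" and B: "B \<in> carrier_mat n n"
    and comm: "S * transpose_mat B = B * S"
  shows "(Q * S * transpose_mat Q) * transpose_mat (Q * B * Qi) = (Q * B * Qi) * (Q * S * transpose_mat Q)"
proof -
  note assoc = assoc_mult_mat[of _ n n _ n _ n]
  have QtQit: "transpose_mat Q * transpose_mat Qi = 1\<^sub>m n" using transpose_mult[OF Qi Q] Qi_Q by simp
  have "(Q * S * transpose_mat Q) * transpose_mat (Q * B * Qi)
      = Q * S * (transpose_mat Q * transpose_mat Qi) * transpose_mat B * transpose_mat Q"
    using Q Qi S B by (simp add: transpose_mult[of _ n n _ n] assoc)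
  also have "\<dots> = Q * (S * transpose_mat B) * transpose_mat Q" using QtQit Q S B by (simp add: assoc)
  also have "\<dots> = Q * B * (Qi * Q) * S * transpose_mat Q" using comm Qi_Q Q B S by (simp add: assoc)
  also have "\<dots> = (Q * B * Qi) * (Q * S * transpose_mat Q)" using Q Qi S B by (simp add: assoc)
  finally show ?thesis .
qed

lemma antiautomorphism_fixing_tridiagonal_pair:
  fixes A As Q Qi :: "'a::field mat"
  assumes Q: "Q \<in> carrier_mat n n" and Qi: "Qi \<in> carrier_mat n n"
    and Q_Qi: "Q * Qi = 1\<^sub>m n" and Qi_Q: "Qi * Q = 1\<^sub>m n"
    and A: "A \<in> carrier_mat n n" and As: "As \<in> carrier_mat n n"
    and As_Q: "As * Q = Q * mat_diag n t" and tri: "irreducible_tridiagonal (Qi * A * Q)"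
  shows "\<exists>\<sigma>. antiautomorphism n \<sigma> \<and> \<sigma> A = A \<and> \<sigma> As = As"
proof -
  note assoc = assoc_mult_mat[of _ n n _ n _ n]
  define B where "B = Qi * A * Q"
  have B: "B \<in> carrier_mat n n" using Q Qi A by (simp add: B_def)
  define s where "s = tridiagonal_symmetrizer B"
  have s: "s i \<noteq> 0" if "i < n" for i
    using tridiagonal_symmetrizer_nonzero[of B i] tri B Qi that by (simp add: B_def s_def)
  define S where "S = mat_diag n s"
  define Si where "Si = mat_diag n (\<lambda>i. inverse (s i))"
  have S: "S \<in> carrier_mat n n" and Si: "Si \<in> carrier_mat n n" by (simp_all add: S_def Si_def)
  have "S * Si = 1\<^sub>m n" "Si * S = 1\<^sub>m n"
    unfolding S_def Si_def mat_diag_diag using s by (auto simp: mat_diag_def intro!: eq_matI)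
  note inv = congruence_inverse[OF Q Qi Q_Qi Qi_Q S Si this]
  define M where "M = Q * S * transpose_mat Q"
  define Mi where "Mi = transpose_mat Qi * Si * Qi"
  have M: "M \<in> carrier_mat n n" and Mi: "Mi \<in> carrier_mat n n"
    using Q Qi S Si by (simp_all add: M_def Mi_def)
  have fixed: "M * transpose_mat X * Mi = X"
    if X: "X \<in> carrier_mat n n" and XM: "M * transpose_mat X = X * M" for X
  proof -
    have "M * transpose_mat X * Mi = X * (M * Mi)" using XM X M Mi by (simp add: assoc)
    then show ?thesis using inv(1) X by (simp add: M_def Mi_def)
  qed
  txt \<open>In the eigenbasis of As, the matrix of A is irreducible tridiagonal and that of As is
    diagonal; the diagonal matrix S symmetrizes both, so transposition in that basis fixes them.\<close>
  have "Q * B * Qi = (Q * Qi) * A * (Q * Qi)" using A Q Qi by (simp add: B_def assoc)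
  moreover have "Q * mat_diag n t * Qi = As * (Q * Qi)" using As Q Qi by (simp add: As_Q[symmetric] assoc)
  ultimately have "Q * B * Qi = A" "Q * mat_diag n t * Qi = As" using Q_Qi A As by simp_all
  moreover have "S * transpose_mat B = B * S"
    using tridiagonal_symmetrizer_commute[OF B] tri by (simp add: S_def s_def B_def)
  moreover have "S * transpose_mat (mat_diag n t) = mat_diag n t * S"
    unfolding S_def transpose_mat_diag mat_diag_diag by (simp add: mult.commute)
  ultimately have "M * transpose_mat A = A * M" "M * transpose_mat As = As * M"
    using congruence_commute_transpose[OF Q Qi Qi_Q S] B unfolding M_def by (metis mat_diag_dim)+
  then show ?thesis
    using antiautomorphism_conj_transpose[OF M Mi] inv fixed A As unfolding M_def Mi_def by blast
qed

lemma antiautomorphism_carrier: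
  "antiautomorphism n \<sigma> \<Longrightarrow> X \<in> carrier_mat n n \<Longrightarrow> \<sigma> X \<in> carrier_mat n n"
  unfolding antiautomorphism_def bij_betw_def by auto

lemma antiautomorphism_smult:
  "antiautomorphism n \<sigma> \<Longrightarrow> X \<in> carrier_mat n n \<Longrightarrow> \<sigma> (c \<cdot>\<^sub>m X) = c \<cdot>\<^sub>m \<sigma> X"
  unfolding antiautomorphism_def by blast

lemma antiautomorphism_mult:
  "antiautomorphism n \<sigma> \<Longrightarrow> X \<in> carrier_mat n n \<Longrightarrow> Y \<in> carrier_mat n n \<Longrightarrow>
   \<sigma> (X * Y) = \<sigma> Y * \<sigma> X"
  unfolding antiautomorphism_def by blast

lemma antiautomorphism_one:
  fixes \<sigma> :: "'a::field mat \<Rightarrow> 'a mat"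
  assumes \<sigma>: "antiautomorphism n \<sigma>"
  shows "\<sigma> (1\<^sub>m n) = 1\<^sub>m n"
proof -
  obtain X where X: "X \<in> carrier_mat n n" "\<sigma> X = 1\<^sub>m n"
    using \<sigma> unfolding antiautomorphism_def bij_betw_def by (metis image_iff one_carrier_mat)
  have "\<sigma> (1\<^sub>m n) = \<sigma> (1\<^sub>m n) * \<sigma> X"
    using X right_mult_one_mat[OF antiautomorphism_carrier[OF \<sigma> one_carrier_mat]] by simp
  also have "\<dots> = \<sigma> (X * 1\<^sub>m n)" using antiautomorphism_mult[OF \<sigma> X(1) one_carrier_mat] by simp
  finally show ?thesis using X right_mult_one_mat[OF X(1)] by simp
qed

lemma antiautomorphism_shift:
  fixes \<sigma> :: "'a::field mat \<Rightarrow> 'a mat"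
  assumes \<sigma>: "antiautomorphism n \<sigma>" and X: "X \<in> carrier_mat n n"
  shows "\<sigma> (c \<cdot>\<^sub>m (X - t \<cdot>\<^sub>m 1\<^sub>m n)) = c \<cdot>\<^sub>m (\<sigma> X - t \<cdot>\<^sub>m 1\<^sub>m n)"
proof -
  have "X - t \<cdot>\<^sub>m 1\<^sub>m n = X + (- t) \<cdot>\<^sub>m 1\<^sub>m n" using X by (auto intro!: eq_matI)
  moreover have "\<sigma> X - t \<cdot>\<^sub>m 1\<^sub>m n = \<sigma> X + (- t) \<cdot>\<^sub>m 1\<^sub>m n"
    using antiautomorphism_carrier[OF \<sigma> X] by (auto intro!: eq_matI)
  ultimately show ?thesis
    using \<sigma> X antiautomorphism_one[OF \<sigma>] unfolding antiautomorphism_def by simp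
qed

lemma shift_mult_commute:
  fixes X Y :: "'a::comm_ring_1 mat"
  assumes X: "X \<in> carrier_mat n n" and Y: "Y \<in> carrier_mat n n" and comm: "X * Y = Y * X"
  shows "(c \<cdot>\<^sub>m (X - t \<cdot>\<^sub>m 1\<^sub>m n)) * Y = Y * (c \<cdot>\<^sub>m (X - t \<cdot>\<^sub>m 1\<^sub>m n))"
proof -
  have shift: "X - t \<cdot>\<^sub>m 1\<^sub>m n \<in> carrier_mat n n" using X by (simp add: minus_carrier_mat)
  have "(X - t \<cdot>\<^sub>m 1\<^sub>m n) * Y = X * Y - t \<cdot>\<^sub>m Y"
    using X Y by (simp add: minus_mult_distrib_mat[of _ n n _ _ n] mult_smult_assoc_mat[of _ n n _ n])
  also have "\<dots> = Y * (X - t \<cdot>\<^sub>m 1\<^sub>m n)"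
    using X Y comm by (simp add: mult_minus_distrib_mat[of _ n n _ n] mult_smult_distrib[of _ n n _ n])
  finally show ?thesis
    using shift Y by (simp add: mult_smult_assoc_mat[of _ n n _ n] mult_smult_distrib[of _ n n _ n])
qed

lemma antiautomorphism_fixes_prim_idem:
  fixes \<sigma> :: "'a::field mat \<Rightarrow> 'a mat"
  assumes \<sigma>: "antiautomorphism (Suc d) \<sigma>" and X: "X \<in> carrier_mat (Suc d) (Suc d)" and \<sigma>X: "\<sigma> X = X"
  shows "\<sigma> (prim_idem d X t i) = prim_idem d X t i"
proof -
  let ?n = "Suc d"
  let ?F = "\<lambda>j. inverse (t i - t j) \<cdot>\<^sub>m (X - t j \<cdot>\<^sub>m 1\<^sub>m ?n)"
  let ?prod = "\<lambda>js. foldr (\<lambda>j M. ?F j * M) js (1\<^sub>m ?n)"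
  have F: "?F j \<in> carrier_mat ?n ?n" for j using X by (simp add: minus_carrier_mat)
  have prod: "?prod js \<in> carrier_mat ?n ?n" for js by (rule shift_product_carrier[OF X])
  have F_comm: "?F j * Y = Y * ?F j" if Y: "Y \<in> carrier_mat ?n ?n" "X * Y = Y * X" for j Y
    using shift_mult_commute[OF X Y] .
  have X_prod: "X * ?prod js = ?prod js * X" for js
  proof (induction js)
    case (Cons j js)
    have "X * (?F j * ?prod js) = (X * ?F j) * ?prod js"
      using X F prod by (simp add: assoc_mult_mat[of _ ?n ?n _ ?n _ ?n])
    also have "\<dots> = (?F j * X) * ?prod js" using F_comm[OF X refl] by simp
    also have "\<dots> = ?F j * (X * ?prod js)"
      using X F prod by (simp add: assoc_mult_mat[of _ ?n ?n _ ?n _ ?n])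
    also have "\<dots> = (?F j * ?prod js) * X"
      using Cons X F prod by (simp add: assoc_mult_mat[of _ ?n ?n _ ?n _ ?n])
    finally show ?case by simp
  qed (use X in simp)
  have "\<sigma> (?prod js) = ?prod js" for js
  proof (induction js)
    case (Cons j js)
    have "\<sigma> (?F j * ?prod js) = \<sigma> (?prod js) * \<sigma> (?F j)"
      using \<sigma> F prod unfolding antiautomorphism_def by simp
    also have "\<dots> = ?prod js * ?F j" using Cons antiautomorphism_shift[OF \<sigma> X] \<sigma>X by simp
    also have "\<dots> = ?F j * ?prod js" using F_comm[OF prod X_prod] by simp
    finally show ?case by simp
  qed (use antiautomorphism_one[OF \<sigma>] in simp)
  then show ?thesis unfolding prim_idem_def by blast
qed

lemma antiautomorphism_mult3_eq_0_iff:
  fixes \<sigma> :: "'a::field mat \<Rightarrow> 'a mat"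
  assumes \<sigma>: "antiautomorphism n \<sigma>"
    and X: "X \<in> carrier_mat n n" and Y: "Y \<in> carrier_mat n n" and Z: "Z \<in> carrier_mat n n"
    and fixed: "\<sigma> X = X" "\<sigma> Y = Y" "\<sigma> Z = Z"
  shows "X * Y * Z = 0\<^sub>m n n \<longleftrightarrow> Z * Y * X = 0\<^sub>m n n"
proof -
  have reverse: "\<sigma> (U * V * W) = W * V * U"
    if "U \<in> carrier_mat n n" "V \<in> carrier_mat n n" "W \<in> carrier_mat n n"
       "\<sigma> U = U" "\<sigma> V = V" "\<sigma> W = W" for U V W
    using \<sigma> that unfolding antiautomorphism_def by (simp add: assoc_mult_mat[of _ n n _ n _ n])
  have zero: "\<sigma> (0\<^sub>m n n) = 0\<^sub>m n n"
  proof -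
    have "0\<^sub>m n n = (0 :: 'a) \<cdot>\<^sub>m 1\<^sub>m n" by (auto intro!: eq_matI)
    then have "\<sigma> (0\<^sub>m n n) = 0 \<cdot>\<^sub>m \<sigma> (1\<^sub>m n)"
      using antiautomorphism_smult[OF \<sigma> one_carrier_mat] by metis
    then show ?thesis using antiautomorphism_one[OF \<sigma>] by (auto intro!: eq_matI)
  qed
  have inj: "inj_on \<sigma> (carrier_mat n n)" using \<sigma> unfolding antiautomorphism_def bij_betw_def by blast
  show ?thesis
  proof
    assume "X * Y * Z = 0\<^sub>m n n"
    then show "Z * Y * X = 0\<^sub>m n n" using reverse[OF X Y Z fixed] zero by simp
  next
    assume "Z * Y * X = 0\<^sub>m n n"
    then have "\<sigma> (X * Y * Z) = \<sigma> (0\<^sub>m n n)" using reverse[OF X Y Z fixed] zero by simp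
    then show "X * Y * Z = 0\<^sub>m n n" using inj_onD[OF inj] X Y Z by simp
  qed
qed

section \<open>Newton vectors\<close>

fun newton_vec :: "'a::field mat \<Rightarrow> (nat \<Rightarrow> 'a) \<Rightarrow> 'a vec \<Rightarrow> nat \<Rightarrow> 'a vec" where
  "newton_vec X \<phi> v 0 = v"
| "newton_vec X \<phi> v (Suc i) = (X - \<phi> i \<cdot>\<^sub>m 1\<^sub>m (dim_row X)) *\<^sub>v newton_vec X \<phi> v i"

lemma newton_vec_carrier:
  "X \<in> carrier_mat n n \<Longrightarrow> v \<in> carrier_vec n \<Longrightarrow> newton_vec X \<phi> v i \<in> carrier_vec n"
  by (induction i) auto

lemma mult_newton_vec:
  assumes X: "X \<in> carrier_mat n n" and v: "v \<in> carrier_vec n"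
  shows "X *\<^sub>v newton_vec X \<phi> v i = \<phi> i \<cdot>\<^sub>v newton_vec X \<phi> v i + newton_vec X \<phi> v (Suc i)"
  using newton_vec_carrier[OF X v, of \<phi> i] X by (auto simp: shift_mult_mat_vec intro!: eq_vecI)

lemma newton_vec_conj:
  assumes C: "C \<in> carrier_mat n n" and Ci: "Ci \<in> carrier_mat n n" and C_Ci: "C * Ci = 1\<^sub>m n"
    and X: "X \<in> carrier_mat n n" and v: "v \<in> carrier_vec n"
  shows "Ci *\<^sub>v newton_vec X \<phi> v i = newton_vec (Ci * X * C) \<phi> (Ci *\<^sub>v v) i"
proof (induction i)
  case (Suc i)
  let ?u = "newton_vec X \<phi> v i"
  have u: "?u \<in> carrier_vec n" by (rule newton_vec_carrier[OF X v])
  have conj: "Ci *\<^sub>v (X *\<^sub>v ?u) = (Ci * X * C) *\<^sub>v (Ci *\<^sub>v ?u)"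
  proof -
    have "(Ci * X * C) *\<^sub>v (Ci *\<^sub>v ?u) = Ci *\<^sub>v (X *\<^sub>v ((C * Ci) *\<^sub>v ?u))"
      using X C Ci u by (simp add: assoc_mult_mat_vec[of _ n n _ n])
    then show ?thesis using C_Ci u by simp
  qed
  have "Ci *\<^sub>v newton_vec X \<phi> v (Suc i) = Ci *\<^sub>v (X *\<^sub>v ?u) - \<phi> i \<cdot>\<^sub>v (Ci *\<^sub>v ?u)"
    using X Ci u by (simp add: shift_mult_mat_vec mult_minus_distrib_mat_vec[of _ n n] mult_mat_vec)
  also have "\<dots> = newton_vec (Ci * X * C) \<phi> (Ci *\<^sub>v v) (Suc i)"
    unfolding conj Suc.IH using X C Ci newton_vec_carrier[of "Ci * X * C" n "Ci *\<^sub>v v"] v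
    by (simp add: shift_mult_mat_vec)
  finally show ?case .
qed simp

lemma newton_vec_mat_diag_index:
  fixes v :: "'a::field vec"
  assumes v: "v \<in> carrier_vec n" and j: "j < n"
  shows "newton_vec (mat_diag n t) \<phi> v i $ j = (\<Prod>s<i. t j - \<phi> s) * v $ j"
proof (induction i)
  case (Suc i)
  let ?u = "newton_vec (mat_diag n t) \<phi> v i"
  have u: "?u \<in> carrier_vec n" by (rule newton_vec_carrier[OF mat_diag_dim v])
  have "newton_vec (mat_diag n t) \<phi> v (Suc i) = mat_diag n t *\<^sub>v ?u - \<phi> i \<cdot>\<^sub>v ?u"
    using u by (simp add: shift_mult_mat_vec)
  then have "newton_vec (mat_diag n t) \<phi> v (Suc i) $ j = (t j - \<phi> i) * ?u $ j"
    using u j index_mat_diag_mult_vec[OF u j] by (simp add: algebra_simps del: index_mult_mat_vec)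
  then show ?case using Suc.IH by (simp add: ac_simps)
qed simp

lemma newton_vec_hessenberg:
  fixes M :: "'a::field mat"
  assumes M: "M \<in> carrier_mat n n" and band: "lower_bandwidth_le 1 M"
  shows "i < n \<Longrightarrow> (\<forall>j. i < j \<longrightarrow> j < n \<longrightarrow> newton_vec M \<phi> (unit_vec n 0) i $ j = 0) \<and>
    newton_vec M \<phi> (unit_vec n 0) i $ i = (\<Prod>s<i. M $$ (Suc s, s))"
proof (induction i)
  case (Suc i)
  let ?u = "newton_vec M \<phi> (unit_vec n 0) i"
  let ?S = "M - \<phi> i \<cdot>\<^sub>m 1\<^sub>m n"
  have u: "?u \<in> carrier_vec n" by (rule newton_vec_carrier[OF M unit_vec_carrier])
  have S: "?S \<in> carrier_mat n n" using M by (simp add: minus_carrier_mat)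
  have IH: "\<And>j. i < j \<Longrightarrow> j < n \<Longrightarrow> ?u $ j = 0" "?u $ i = (\<Prod>s<i. M $$ (Suc s, s))"
    using Suc by auto
  note step = lower_bandwidth_mult_vec[OF S lower_bandwidth_le_shift[OF M band] u IH(1)]
  have "newton_vec M \<phi> (unit_vec n 0) (Suc i) = ?S *\<^sub>v ?u" using M by simp
  then show ?case using step Suc.prems M IH(2) by (auto simp: ac_simps)
qed simp

section \<open>Diagonalization\<close>

locale diagonalization =
  fixes d :: nat and X :: "'a::field mat" and t :: "nat \<Rightarrow> 'a" and P Pinv :: "'a mat"
  assumes X: "X \<in> carrier_mat (Suc d) (Suc d)"
    and P: "P \<in> carrier_mat (Suc d) (Suc d)" and Pinv: "Pinv \<in> carrier_mat (Suc d) (Suc d)"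
    and P_Pinv: "P * Pinv = 1\<^sub>m (Suc d)" and Pinv_P: "Pinv * P = 1\<^sub>m (Suc d)"
    and X_P: "X * P = P * mat_diag (Suc d) t"
    and inj: "inj_on t {0..d}"
begin

abbreviation "n \<equiv> Suc d"

lemma Pinv_X_P: "Pinv * X * P = mat_diag n t"
proof -
  have "Pinv * X * P = (Pinv * P) * mat_diag n t"
    using X P Pinv by (simp add: X_P assoc_mult_mat[of _ n n _ n _ n])
  then show ?thesis using Pinv_P by simp
qed

lemma Pinv_X: "Pinv * X = mat_diag n t * Pinv"
proof -
  have "Pinv * X = (Pinv * X * P) * Pinv"
    using X P Pinv P_Pinv by (simp add: assoc_mult_mat[of _ n n _ n _ n])
  then show ?thesis using Pinv_X_P by simp
qed

lemma prim_idem_eq: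
  "i \<le> d \<Longrightarrow> prim_idem d X t i = P * mat_diag n (\<lambda>k. if k = i then 1 else 0) * Pinv"
  using prim_idem_mult_diagonalizing[OF X P X_P inj] prim_idem_carrier[OF X, of t i] P Pinv P_Pinv
  by (metis assoc_mult_mat right_mult_one_mat)

lemma prim_idem_mult_mult_eq_0_iff:
  assumes M: "M \<in> carrier_mat n n" and i: "i \<le> d" and j: "j \<le> d"
  shows "prim_idem d X t i * M * prim_idem d X t j = 0\<^sub>m n n \<longleftrightarrow> (Pinv * M * P) $$ (i,j) = 0"
proof -
  note assoc = assoc_mult_mat[of _ n n _ n _ n]
  define B where "B = Pinv * M * P"
  have B: "B \<in> carrier_mat n n" using M P Pinv by (simp add: B_def)
  define Y where "Y = mat_diag n (\<lambda>k. if k = i then 1 else 0) * B * mat_diag n (\<lambda>k. if k = j then 1 else 0)"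
  have Y: "Y \<in> carrier_mat n n" using B by (simp add: Y_def)
  have Y_entry: "Y $$ (r,k) = (if r = i \<and> k = j then B $$ (i,j) else 0)" if "r < n" "k < n" for r k
    using that B by (simp add: Y_def mat_diag_mult_left[OF B] mat_diag_mult_right[of _ n n])
  have E: "prim_idem d X t i * M * prim_idem d X t j = P * Y * Pinv"
    using i j M P Pinv by (simp add: prim_idem_eq Y_def B_def assoc)
  have "P * Y * Pinv = 0\<^sub>m n n \<longleftrightarrow> Y = 0\<^sub>m n n"
  proof
    assume "P * Y * Pinv = 0\<^sub>m n n"
    then have "Pinv * (P * Y * Pinv) * P = 0\<^sub>m n n" using P Pinv by simp
    moreover have "Pinv * (P * Y * Pinv) * P = (Pinv * P) * Y * (Pinv * P)" using P Pinv Y by (simp add: assoc)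
    ultimately show "Y = 0\<^sub>m n n" using Pinv_P Y by simp
  qed (use P Pinv in simp)
  also have "\<dots> \<longleftrightarrow> B $$ (i,j) = 0"
  proof
    assume "Y = 0\<^sub>m n n"
    then show "B $$ (i,j) = 0" using Y_entry[of i j] i j by simp
  qed (use Y Y_entry in \<open>auto intro!: eq_matI\<close>)
  finally show ?thesis using E by (simp add: B_def)
qed

lemma coords_newton_vec:
  assumes v: "v \<in> carrier_vec n" and j: "j < n"
  shows "(Pinv *\<^sub>v newton_vec X \<phi> v k) $ j = (\<Prod>s<k. t j - \<phi> s) * (Pinv *\<^sub>v v) $ j"
  using newton_vec_conj[OF P Pinv P_Pinv X v] newton_vec_mat_diag_index[of "Pinv *\<^sub>v v" n j t \<phi> k] Pinv v j
  by (simp add: Pinv_X_P)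

lemma coords_intertwine:
  assumes W: "W \<in> carrier_mat n n" and Wi: "Wi \<in> carrier_mat n n" and W_Wi: "W * Wi = 1\<^sub>m n"
  shows "Pinv * W * (Wi * X * W) = mat_diag n t * (Pinv * W)"
proof -
  have "Pinv * W * (Wi * X * W) = Pinv * (W * Wi) * X * W"
    using W Wi X Pinv by (simp add: assoc_mult_mat[of _ n n _ n _ n])
  also have "\<dots> = mat_diag n t * Pinv * W" using W_Wi Pinv X by (simp add: Pinv_X)
  finally show ?thesis using Pinv W by (simp add: assoc_mult_mat[of _ n n _ n _ n])
qed

lemma coords_lower_triangular:
  assumes W: "W \<in> carrier_mat n n" and Wi: "Wi \<in> carrier_mat n n" and W_Wi: "W * Wi = 1\<^sub>m n"
    and tri: "lower_bandwidth_le 0 (Wi * X * W)" and diag: "\<And>k. k < n \<Longrightarrow> (Wi * X * W) $$ (k,k) = t k"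
  shows "lower_bandwidth_le 0 (Pinv * W)"
proof (rule intertwining_upper_triangular[of _ n "mat_diag n t" "Wi * X * W"])
  show "mat_diag n t * (Pinv * W) = Pinv * W * (Wi * X * W)"
    using coords_intertwine[OF W Wi W_Wi] by simp
  show "\<And>i j. j < i \<Longrightarrow> i < n \<Longrightarrow> mat_diag n t $$ (i,i) \<noteq> (Wi * X * W) $$ (j,j)"
    using diag inj by (auto simp: index_mat_diag dest: inj_onD)
qed (use W Wi X Pinv tri lower_bandwidth_le_mat_diag in auto)

lemma coords_upper_triangular:
  assumes W: "W \<in> carrier_mat n n" and Wi: "Wi \<in> carrier_mat n n" and W_Wi: "W * Wi = 1\<^sub>m n"
    and tri: "upper_bandwidth_le 0 (Wi * X * W)" and diag: "\<And>k. k < n \<Longrightarrow> (Wi * X * W) $$ (k,k) = t k"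
  shows "upper_bandwidth_le 0 (Pinv * W)"
  unfolding upper_bandwidth_le_iff_transpose
proof (rule intertwining_upper_triangular[of _ n "transpose_mat (Wi * X * W)" "mat_diag n t"])
  note coords_intertwine[OF W Wi W_Wi]
  moreover have PiW: "Pinv * W \<in> carrier_mat n n" and R: "Wi * X * W \<in> carrier_mat n n"
    using W Wi X Pinv by simp_all
  ultimately show "transpose_mat (Wi * X * W) * transpose_mat (Pinv * W) = transpose_mat (Pinv * W) * mat_diag n t"
    using transpose_mult[OF PiW R] transpose_mult[OF mat_diag_dim PiW] by (simp add: transpose_mat_diag)
  show "\<And>i j. j < i \<Longrightarrow> i < n \<Longrightarrow> transpose_mat (Wi * X * W) $$ (i,i) \<noteq> mat_diag n t $$ (j,j)"
    using diag inj W Wi by (auto simp: index_mat_diag dest: inj_onD)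
qed (use W Wi X Pinv tri lower_bandwidth_le_mat_diag in \<open>auto simp: upper_bandwidth_le_iff_transpose\<close>)

lemma newton_vec_annihilated:
  assumes v: "v \<in> carrier_vec n"
  shows "newton_vec X t v n = 0\<^sub>v n"
proof (rule inverse_mult_vec_cancel[OF P Pinv P_Pinv])
  show "Pinv *\<^sub>v newton_vec X t v n = Pinv *\<^sub>v 0\<^sub>v n"
  proof (rule eq_vecI)
    fix j assume "j < dim_vec (Pinv *\<^sub>v 0\<^sub>v n)"
    then have j: "j < n" using Pinv by simp
    then have "(\<Prod>s<n. t j - t s) = 0" by (intro prod_zero) auto
    then show "(Pinv *\<^sub>v newton_vec X t v n) $ j = (Pinv *\<^sub>v 0\<^sub>v n) $ j"
      using coords_newton_vec[OF v j, of t n] j mult_mat_vec_zero[OF Pinv]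
      by (simp del: newton_vec.simps index_mult_mat_vec)
  qed (use Pinv in simp)
qed (use newton_vec_carrier[OF X v] in \<open>simp_all del: newton_vec.simps\<close>)

lemma coords_newton_basis_upper_triangular:
  assumes v: "v \<in> carrier_vec n"
  shows "upper_bandwidth_le 0 (Pinv * mat_of_col_fun n (newton_vec X t v))"
  unfolding upper_bandwidth_le_def
proof (intro allI impI)
  fix r k assume r: "r < dim_row (Pinv * mat_of_col_fun n (newton_vec X t v))"
    and k: "k < dim_col (Pinv * mat_of_col_fun n (newton_vec X t v))" and rk: "r + 0 < k"
  have rk': "r < n" "k < n" using r k Pinv by simp_all
  have "(Pinv * mat_of_col_fun n (newton_vec X t v)) $$ (r,k) = (Pinv *\<^sub>v newton_vec X t v k) $ r"
    using rk' Pinv col_mat_of_col_fun[OF rk'(2) newton_vec_carrier[OF X v]] by simp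
  also have "\<dots> = (\<Prod>s<k. t r - t s) * (Pinv *\<^sub>v v) $ r" by (rule coords_newton_vec[OF v rk'(1)])
  also have "(\<Prod>s<k. t r - t s) = 0" using rk by (intro prod_zero) auto
  finally show "(Pinv * mat_of_col_fun n (newton_vec X t v)) $$ (r,k) = 0" by simp
qed

lemma newton_basis_triangular_coords:
  assumes Y: "Y \<in> carrier_mat n n" and hess: "irreducible_upper_hessenberg (Pinv * Y * P)"
  shows "lower_bandwidth_le 0 (Pinv * mat_of_col_fun n (newton_vec Y \<phi> (col P 0)))"
    and "det (mat_of_col_fun n (newton_vec Y \<phi> (col P 0))) \<noteq> 0"
proof -
  let ?u = "newton_vec Y \<phi> (col P 0)"
  let ?T = "Pinv * mat_of_col_fun n ?u"
  have p0: "col P 0 \<in> carrier_vec n" by (rule col_carrier_vec[OF _ P]) simp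
  have B: "Pinv * Y * P \<in> carrier_mat n n" using Y P Pinv by simp
  have T_entry: "?T $$ (r,k) = newton_vec (Pinv * Y * P) \<phi> (unit_vec n 0) k $ r"
    if "r < n" "k < n" for r k
  proof -
    have "?T $$ (r,k) = (Pinv *\<^sub>v ?u k) $ r"
      using that Pinv col_mat_of_col_fun[of k n ?u, OF that(2) newton_vec_carrier[OF Y p0]] by simp
    also have "Pinv *\<^sub>v ?u k = newton_vec (Pinv * Y * P) \<phi> (unit_vec n 0) k"
      using newton_vec_conj[OF P Pinv P_Pinv Y p0, of \<phi> k] inverse_mult_col_eq_unit_vec[OF P Pinv Pinv_P, of 0] by simp
    finally show ?thesis .
  qed
  have band: "lower_bandwidth_le 1 (Pinv * Y * P)" using hess by (simp add: irreducible_upper_hessenberg_def)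
  note triangular = newton_vec_hessenberg[OF B band]
  show tri: "lower_bandwidth_le 0 ?T"
    unfolding lower_bandwidth_le_def
  proof (intro allI impI)
    fix r k assume "r < dim_row ?T" "k < dim_col ?T" "k + 0 < r"
    then have rk: "r < n" "k < n" "k < r" using Pinv by auto
    then show "?T $$ (r,k) = 0" using T_entry[OF rk(1,2)] triangular[where i = k and \<phi> = \<phi>] by simp
  qed
  have "?T $$ (k,k) \<noteq> 0" if "k < n" for k
    using T_entry[OF that that] triangular[where i = k and \<phi> = \<phi>] hess Pinv that
    unfolding irreducible_upper_hessenberg_def by auto
  then have "0 \<notin> set (diag_mat ?T)" using Pinv by (auto simp: diag_mat_def)
  then have "det ?T \<noteq> 0"
    using det_upper_triangular[of ?T n] tri lower_bandwidth_le_0_iff_upper_triangular[of ?T n] Pinv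
    by (simp add: prod_list_zero_iff)
  then show "det (mat_of_col_fun n ?u) \<noteq> 0" using det_mult[OF Pinv mat_of_col_fun_carrier] by simp
qed

lemma conj_triangular_if_coords_triangular:
  assumes U: "U \<in> carrier_mat n n" and Ui: "Ui \<in> carrier_mat n n" and Ui_U: "Ui * U = 1\<^sub>m n"
    and tri: "lower_bandwidth_le 0 (Pinv * U)"
  shows "lower_bandwidth_le 0 (Ui * X * U)" and "k < n \<Longrightarrow> (Ui * X * U) $$ (k,k) = t k"
proof -
  note assoc = assoc_mult_mat[of _ n n _ n _ n]
  have inv: "(Ui * P) * (Pinv * U) = 1\<^sub>m n"
  proof -
    have "(Ui * P) * (Pinv * U) = Ui * (P * Pinv) * U" using U Ui P Pinv by (simp add: assoc)
    then show ?thesis using P_Pinv Ui_U U Ui by simp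
  qed
  note tri_inv = upper_triangular_inverse[OF _ _ inv tri]
  have eq: "Ui * X * U = (Ui * P) * mat_diag n t * (Pinv * U)"
  proof -
    have "(Ui * P) * mat_diag n t * (Pinv * U) = Ui * (P * Pinv) * X * (P * Pinv) * U"
      unfolding Pinv_X_P[symmetric] using U Ui P Pinv X by (simp add: assoc)
    then show ?thesis using P_Pinv U Ui X by simp
  qed
  show "lower_bandwidth_le 0 (Ui * X * U)" "k < n \<Longrightarrow> (Ui * X * U) $$ (k,k) = t k"
    unfolding eq using triangular_conj_mat_diag[of "Pinv * U" n "Ui * P"] tri tri_inv U Ui P Pinv by auto
qed

lemma hessenberg_coords_of_lower_frame:
  assumes W: "W \<in> carrier_mat n n" and Wi: "Wi \<in> carrier_mat n n"
    and W_Wi: "W * Wi = 1\<^sub>m n" and Wi_W: "Wi * W = 1\<^sub>m n"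
    and tri: "lower_bandwidth_le 0 (Wi * X * W)" and diag: "\<And>k. k < n \<Longrightarrow> (Wi * X * W) $$ (k,k) = t k"
    and Y: "Y \<in> carrier_mat n n" and hess: "irreducible_upper_hessenberg (Wi * Y * W)"
  shows "irreducible_upper_hessenberg (Pinv * Y * P)"
proof -
  note assoc = assoc_mult_mat[of _ n n _ n _ n]
  have "(Wi * P) * (Pinv * W) = 1\<^sub>m n"
  proof -
    have "(Wi * P) * (Pinv * W) = Wi * (P * Pinv) * W" using W Wi P Pinv by (simp add: assoc)
    then show ?thesis using P_Pinv Wi_W W Wi by simp
  qed
  moreover have "Pinv * Y * P = (Pinv * W) * (Wi * Y * W) * (Wi * P)"
  proof -
    have "(Pinv * W) * (Wi * Y * W) * (Wi * P) = Pinv * (W * Wi) * Y * (W * Wi) * P"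
      using W Wi P Pinv Y by (simp add: assoc)
    then show ?thesis using W_Wi Y P Pinv by simp
  qed
  ultimately show ?thesis
    using irreducible_upper_hessenberg_similar[of "Pinv * W" n "Wi * P" "Wi * Y * W"]
      coords_lower_triangular[OF W Wi W_Wi tri diag] hess W Wi P Pinv Y by simp
qed

lemma hessenberg_transpose_coords_of_upper_frame:
  assumes W: "W \<in> carrier_mat n n" and Wi: "Wi \<in> carrier_mat n n"
    and W_Wi: "W * Wi = 1\<^sub>m n" and Wi_W: "Wi * W = 1\<^sub>m n"
    and tri: "upper_bandwidth_le 0 (Wi * X * W)" and diag: "\<And>k. k < n \<Longrightarrow> (Wi * X * W) $$ (k,k) = t k"
    and Y: "Y \<in> carrier_mat n n" and hess: "irreducible_upper_hessenberg (transpose_mat (Wi * Y * W))"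
  shows "irreducible_upper_hessenberg (transpose_mat (Pinv * Y * P))"
proof -
  note assoc = assoc_mult_mat[of _ n n _ n _ n]
  have "(Pinv * W) * (Wi * P) = 1\<^sub>m n"
  proof -
    have "(Pinv * W) * (Wi * P) = Pinv * (W * Wi) * P" using W Wi P Pinv by (simp add: assoc)
    then show ?thesis using Pinv_P W_Wi P Pinv by simp
  qed
  moreover have "Pinv * Y * P = (Pinv * W) * (Wi * Y * W) * (Wi * P)"
  proof -
    have "(Pinv * W) * (Wi * Y * W) * (Wi * P) = Pinv * (W * Wi) * Y * (W * Wi) * P"
      using W Wi P Pinv Y by (simp add: assoc)
    then show ?thesis using W_Wi Y P Pinv by simp
  qed
  ultimately show ?thesis
    using irreducible_upper_hessenberg_transpose_similar[of "Pinv * W" n "Wi * P" "Wi * Y * W"]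
      coords_upper_triangular[OF W Wi W_Wi tri diag] hess W Wi P Pinv Y by simp
qed

lemma hessenberg_transpose_frame_of_upper_coords:
  assumes U: "U \<in> carrier_mat n n" and Ui: "Ui \<in> carrier_mat n n"
    and U_Ui: "U * Ui = 1\<^sub>m n" and Ui_U: "Ui * U = 1\<^sub>m n"
    and tri: "upper_bandwidth_le 0 (Pinv * U)"
    and Y: "Y \<in> carrier_mat n n" and hess: "irreducible_upper_hessenberg (transpose_mat (Pinv * Y * P))"
  shows "irreducible_upper_hessenberg (transpose_mat (Ui * Y * U))"
proof -
  note assoc = assoc_mult_mat[of _ n n _ n _ n]
  have inv: "(Pinv * U) * (Ui * P) = 1\<^sub>m n"
  proof -
    have "(Pinv * U) * (Ui * P) = Pinv * (U * Ui) * P" using U Ui P Pinv by (simp add: assoc)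
    then show ?thesis using Pinv_P U_Ui P Pinv by simp
  qed
  have "(Ui * P) * (Pinv * U) = 1\<^sub>m n"
    using mat_mult_left_right_inverse[OF _ _ inv] U Ui P Pinv by simp
  moreover have "upper_bandwidth_le 0 (Ui * P)"
    using lower_triangular_inverse(1)[OF _ _ inv tri] U Ui P Pinv by simp
  moreover have "Ui * Y * U = (Ui * P) * (Pinv * Y * P) * (Pinv * U)"
  proof -
    have "(Ui * P) * (Pinv * Y * P) * (Pinv * U) = Ui * (P * Pinv) * Y * (P * Pinv) * U"
      using U Ui P Pinv Y by (simp add: assoc)
    then show ?thesis using P_Pinv Y U Ui by simp
  qed
  ultimately show ?thesis
    using irreducible_upper_hessenberg_transpose_similar[of "Ui * P" n "Pinv * U" "Pinv * Y * P"]
      hess U Ui P Pinv Y by simp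
qed

end

lemma eigenvector_matrix_det_nonzero:
  fixes X P :: "'a::field mat"
  assumes X: "X \<in> carrier_mat (Suc d) (Suc d)" and P: "P \<in> carrier_mat (Suc d) (Suc d)"
    and X_P: "X * P = P * mat_diag (Suc d) t" and inj: "inj_on t {0..d}"
    and nonzero: "\<And>k. k < Suc d \<Longrightarrow> col P k \<noteq> 0\<^sub>v (Suc d)"
  shows "det P \<noteq> 0"
proof
  let ?n = "Suc d"
  assume "det P = 0"
  then obtain c where c: "c \<in> carrier_vec ?n" "c \<noteq> 0\<^sub>v ?n" "P *\<^sub>v c = 0\<^sub>v ?n"
    using det_0_iff_vec_prod_zero[OF P] by blast
  then obtain i where i: "i < ?n" "c $ i \<noteq> 0" by (metis carrier_vecD eq_vecI index_zero_vec(1,2))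
  let ?D = "mat_diag ?n (\<lambda>k. if k = i then 1 else 0)"
  have "(P * ?D) *\<^sub>v c = prim_idem d X t i *\<^sub>v (P *\<^sub>v c)"
    using prim_idem_mult_diagonalizing[OF X P X_P inj, of i] i prim_idem_carrier[OF X, of t i] P c(1)
    by (metis assoc_mult_mat_vec less_Suc_eq_le)
  also have "\<dots> = 0\<^sub>v ?n" using c(3) prim_idem_carrier[OF X, of t i] by auto
  finally have zero: "(P * ?D) *\<^sub>v c = 0\<^sub>v ?n" .
  obtain r where r: "r < ?n" "P $$ (r,i) \<noteq> 0"
    using nonzero[OF i(1)] P i(1) by (metis carrier_matD col_dim dim_col eq_vecI index_col index_zero_vec)
  have "((P * ?D) *\<^sub>v c) $ r = (P * ?D) $$ (r,i) * c $ i"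
    by (rule index_mult_mat_vec_single[of _ ?n ?n]) (use P c r i in \<open>auto simp: mat_diag_mult_right[OF P]\<close>)
  also have "\<dots> = P $$ (r,i) * c $ i" using r i P by (auto simp: mat_diag_mult_right[OF P])
  finally show False using zero r i by simp
qed

lemma diagonalization_if_multiplicity_free:
  fixes X :: "'a::field mat"
  assumes mf: "multiplicity_free d X" and ord: "eigen_ordering d X t"
  shows "\<exists>P Pinv. diagonalization d X t P Pinv"
proof -
  let ?n = "Suc d"
  have X: "X \<in> carrier_mat ?n ?n" using mf by (simp add: multiplicity_free_def)
  have inj: "inj_on t {0..d}" using ord by (simp add: eigen_ordering_def)
  have "\<exists>v. k < ?n \<longrightarrow> v \<in> carrier_vec ?n \<and> v \<noteq> 0\<^sub>v ?n \<and> X *\<^sub>v v = t k \<cdot>\<^sub>v v" for k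
  proof (cases "k < ?n")
    case True
    then have "eigenvalue X (t k)" using ord by (auto simp: eigen_ordering_def)
    then show ?thesis using X by (auto simp: eigenvalue_def eigenvector_def)
  qed simp
  then obtain p where p: "\<And>k. k < ?n \<Longrightarrow> p k \<in> carrier_vec ?n \<and> p k \<noteq> 0\<^sub>v ?n \<and> X *\<^sub>v p k = t k \<cdot>\<^sub>v p k"
    by metis
  define P where "P = mat_of_col_fun ?n p"
  have P: "P \<in> carrier_mat ?n ?n" by (simp add: P_def)
  have col_P: "col P k = p k" if "k < ?n" for k
    using p[OF that] that col_mat_of_col_fun by (auto simp: P_def)
  have X_P: "X * P = P * mat_diag ?n t"
  proof (rule eq_matI)
    fix r k assume "r < dim_row (P * mat_diag ?n t)" "k < dim_col (P * mat_diag ?n t)"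
    then have rk: "r < ?n" "k < ?n" using P by auto
    have "(X * P) $$ (r,k) = (X *\<^sub>v p k) $ r" using X P rk col_P[of k] by simp
    also have "\<dots> = t k * P $$ (r,k)" using p[of k] rk by (auto simp: P_def mat_of_col_fun_def)
    finally show "(X * P) $$ (r,k) = (P * mat_diag ?n t) $$ (r,k)"
      using rk P by (simp add: mat_diag_mult_right[OF P] mult.commute)
  qed (use X P in auto)
  have "det P \<noteq> 0" using eigenvector_matrix_det_nonzero[OF X P X_P inj] p col_P by auto
  then obtain Pinv where "Pinv \<in> carrier_mat ?n ?n" "P * Pinv = 1\<^sub>m ?n" "Pinv * P = 1\<^sub>m ?n"
    using det_non_zero_imp_unit[OF P, of "()"] unfolding Units_def ring_mat_def by auto
  then show ?thesis using X P X_P inj unfolding diagonalization_def by blast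
qed

section \<open>Split decompositions\<close>

text \<open>A split decomposition is determined by its first space U_0 = K w0: then
  U_i = K (newton_vec A \<theta> w0 i).\<close>

definition split_generator ::
  "nat \<Rightarrow> 'a::field mat \<Rightarrow> 'a mat \<Rightarrow> (nat \<Rightarrow> 'a) \<Rightarrow> (nat \<Rightarrow> 'a) \<Rightarrow> 'a vec \<Rightarrow> bool" where
  "split_generator d A As \<theta> \<theta>s w0 \<longleftrightarrow> w0 \<in> carrier_vec (Suc d) \<and>
     det (mat_of_col_fun (Suc d) (newton_vec A \<theta> w0)) \<noteq> 0 \<and>
     newton_vec A \<theta> w0 (Suc d) = 0\<^sub>v (Suc d) \<and>
     (As - \<theta>s 0 \<cdot>\<^sub>m 1\<^sub>m (Suc d)) *\<^sub>v w0 = 0\<^sub>v (Suc d) \<and>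
     (\<forall>i. 1 \<le> i \<and> i \<le> d \<longrightarrow> (\<exists>\<phi>. \<phi> \<noteq> 0 \<and>
        (As - \<theta>s i \<cdot>\<^sub>m 1\<^sub>m (Suc d)) *\<^sub>v newton_vec A \<theta> w0 i = \<phi> \<cdot>\<^sub>v newton_vec A \<theta> w0 (i - 1)))"

text \<open>W has the Newton vectors w_i as columns, so Wi * X * W is the matrix of X in the basis w.\<close>

locale newton_frame =
  fixes d :: nat and A :: "'a::field mat" and \<theta> :: "nat \<Rightarrow> 'a" and w0 :: "'a vec" and Wi :: "'a mat"
  assumes A: "A \<in> carrier_mat (Suc d) (Suc d)" and w0: "w0 \<in> carrier_vec (Suc d)"
    and last: "newton_vec A \<theta> w0 (Suc d) = 0\<^sub>v (Suc d)"
    and Wi: "Wi \<in> carrier_mat (Suc d) (Suc d)"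
    and Wi_W: "Wi * mat_of_col_fun (Suc d) (newton_vec A \<theta> w0) = 1\<^sub>m (Suc d)"
begin

abbreviation "n \<equiv> Suc d"
abbreviation "w \<equiv> newton_vec A \<theta> w0"
abbreviation "W \<equiv> mat_of_col_fun n w"

lemma w: "w k \<in> carrier_vec n"
  by (rule newton_vec_carrier[OF A w0])

lemma W_Wi: "W * Wi = 1\<^sub>m n"
  by (rule mat_mult_left_right_inverse[OF Wi mat_of_col_fun_carrier Wi_W])

lemma Wi_w: "j \<le> n \<Longrightarrow> Wi *\<^sub>v w j = unit_vec n j"
proof (cases "j = n")
  case True
  then show ?thesis using last Wi by (auto simp: unit_vec_def intro!: eq_vecI)
next
  case False
  moreover assume "j \<le> n"
  ultimately show ?thesis
    using inverse_mult_col_eq_unit_vec[OF mat_of_col_fun_carrier Wi Wi_W] col_mat_of_col_fun[OF _ w] by simp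
qed

lemma frame_dim: "X \<in> carrier_mat n n \<Longrightarrow> dim_row (Wi * X * W) = n \<and> dim_col (Wi * X * W) = n"
  using Wi by (simp add: mat_of_col_fun_def)

lemma frame_index: "X \<in> carrier_mat n n \<Longrightarrow> r < n \<Longrightarrow> k < n \<Longrightarrow> (Wi * X * W) $$ (r,k) = (Wi *\<^sub>v (X *\<^sub>v w k)) $ r"
  using index_conj_mat[OF mat_of_col_fun_carrier Wi] col_mat_of_col_fun[OF _ w] by simp

lemma A_frame_index:
  assumes "r < n" "k < n"
  shows "(Wi * A * W) $$ (r,k) = (if r = k then \<theta> k else if r = Suc k then 1 else 0)"
proof -
  have "Wi *\<^sub>v (A *\<^sub>v w k) = \<theta> k \<cdot>\<^sub>v unit_vec n k + unit_vec n (Suc k)"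
    using mult_newton_vec[OF A w0, of \<theta> k] Wi_w[of k] Wi_w[of "Suc k"] assms A Wi w[of k] w[of "Suc k"]
    by (simp add: mult_add_distrib_mat_vec[of _ n n] mult_mat_vec del: newton_vec.simps)
  then show ?thesis using frame_index[OF A assms] assms by simp
qed

lemma A_frame:
  shows "upper_bandwidth_le 0 (Wi * A * W)" and "irreducible_upper_hessenberg (Wi * A * W)"
    and "k < n \<Longrightarrow> (Wi * A * W) $$ (k,k) = \<theta> k"
  using A_frame_index frame_dim[OF A]
  by (auto simp: upper_bandwidth_le_def lower_bandwidth_le_def irreducible_upper_hessenberg_def
      simp del: index_mult_mat)

lemma As_frame_if_relations:
  assumes As: "As \<in> carrier_mat n n"
    and first: "(As - \<theta>s 0 \<cdot>\<^sub>m 1\<^sub>m n) *\<^sub>v w0 = 0\<^sub>v n"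
    and lower: "\<And>i. 1 \<le> i \<Longrightarrow> i \<le> d \<Longrightarrow> \<phi> i \<noteq> 0 \<and>
       (As - \<theta>s i \<cdot>\<^sub>m 1\<^sub>m n) *\<^sub>v w i = \<phi> i \<cdot>\<^sub>v w (i - 1)"
  shows "lower_bandwidth_le 0 (Wi * As * W)" and "k < n \<Longrightarrow> (Wi * As * W) $$ (k,k) = \<theta>s k"
    and "irreducible_upper_hessenberg (transpose_mat (Wi * As * W))"
proof -
  have As_w: "As *\<^sub>v w k = \<theta>s k \<cdot>\<^sub>v w k + (if k = 0 then 0\<^sub>v n else \<phi> k \<cdot>\<^sub>v w (k - 1))"
    if "k < n" for k
  proof -
    have "(As - \<theta>s k \<cdot>\<^sub>m 1\<^sub>m n) *\<^sub>v w k = (if k = 0 then 0\<^sub>v n else \<phi> k \<cdot>\<^sub>v w (k - 1))"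
      using first lower[of k] that by auto
    then show ?thesis using shift_mult_mat_vec_eq_iff[OF As w] w by simp
  qed
  have entry: "(Wi * As * W) $$ (r,k) =
      (if r = k then \<theta>s k else if Suc r = k then \<phi> k else 0)" if "r < n" "k < n" for r k
  proof -
    have "Wi *\<^sub>v (As *\<^sub>v w k) = \<theta>s k \<cdot>\<^sub>v unit_vec n k + (if k = 0 then 0\<^sub>v n else \<phi> k \<cdot>\<^sub>v unit_vec n (k - 1))"
      using As_w[OF that(2)] Wi_w[of k] Wi_w[of "k - 1"] that Wi w
      by (auto simp: mult_add_distrib_mat_vec[of _ n n] mult_mat_vec)
    then show ?thesis using frame_index[OF As that] that by auto
  qed
  show "lower_bandwidth_le 0 (Wi * As * W)"
    using entry frame_dim[OF As] by (auto simp: lower_bandwidth_le_def simp del: index_mult_mat)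
  show "(Wi * As * W) $$ (k,k) = \<theta>s k" if "k < n" using entry that by (simp del: index_mult_mat)
  show "irreducible_upper_hessenberg (transpose_mat (Wi * As * W))"
    using entry frame_dim[OF As] lower
    by (auto simp: irreducible_upper_hessenberg_def lower_bandwidth_le_def simp del: index_mult_mat)
qed

lemma relations_if_As_frame:
  assumes As: "As \<in> carrier_mat n n" and tri: "lower_bandwidth_le 0 (Wi * As * W)"
    and diag: "\<And>k. k < n \<Longrightarrow> (Wi * As * W) $$ (k,k) = \<theta>s k"
    and hess: "irreducible_upper_hessenberg (transpose_mat (Wi * As * W))"
    and i: "i \<le> d"
  shows "(As - \<theta>s i \<cdot>\<^sub>m 1\<^sub>m n) *\<^sub>v w i
      = (if i = 0 then 0\<^sub>v n else (Wi * As * W) $$ (i - 1, i) \<cdot>\<^sub>v w (i - 1))"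
    and "1 \<le> i \<Longrightarrow> (Wi * As * W) $$ (i - 1, i) \<noteq> 0"
proof -
  let ?R = "Wi * As * W"
  have dims: "dim_row ?R = n" "dim_col ?R = n" using frame_dim[OF As] by simp_all
  show "1 \<le> i \<Longrightarrow> ?R $$ (i - 1, i) \<noteq> 0"
    using hess i dims unfolding irreducible_upper_hessenberg_def by (cases i) (auto simp del: index_mult_mat)
  have "upper_bandwidth_le 1 ?R"
    using hess by (simp add: irreducible_upper_hessenberg_def upper_bandwidth_le_iff_transpose)
  then have R_zero: "?R $$ (r,i) = 0" if r: "r < n" "r \<noteq> i" "Suc r \<noteq> i" for r
    using tri dims r i unfolding lower_bandwidth_le_def upper_bandwidth_le_def
    by (cases "i < r") (auto simp del: index_mult_mat)
  show "(As - \<theta>s i \<cdot>\<^sub>m 1\<^sub>m n) *\<^sub>v w i = (if i = 0 then 0\<^sub>v n else ?R $$ (i - 1, i) \<cdot>\<^sub>v w (i - 1))"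
  proof (rule inverse_mult_vec_cancel[OF mat_of_col_fun_carrier Wi W_Wi])
    show "Wi *\<^sub>v ((As - \<theta>s i \<cdot>\<^sub>m 1\<^sub>m n) *\<^sub>v w i)
        = Wi *\<^sub>v (if i = 0 then 0\<^sub>v n else ?R $$ (i - 1, i) \<cdot>\<^sub>v w (i - 1))"
    proof (rule eq_vecI)
      fix r assume "r < dim_vec (Wi *\<^sub>v (if i = 0 then 0\<^sub>v n else ?R $$ (i - 1, i) \<cdot>\<^sub>v w (i - 1)))"
      then have r: "r < n" using Wi by simp
      have "(Wi *\<^sub>v ((As - \<theta>s i \<cdot>\<^sub>m 1\<^sub>m n) *\<^sub>v w i)) $ r = ?R $$ (r,i) - \<theta>s i * unit_vec n i $ r"
        using frame_index[OF As r, of i] i As Wi w Wi_w[of i] r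
        by (simp add: shift_mult_mat_vec mult_minus_distrib_mat_vec[of _ n n] mult_mat_vec del: index_mult_mat)
      also have "\<dots> = (if i = 0 then 0 else ?R $$ (i - 1, i) * unit_vec n (i - 1) $ r)"
        using R_zero[OF r] diag[of i] i r by (auto simp del: index_mult_mat)
      also have "\<dots> = (Wi *\<^sub>v (if i = 0 then 0\<^sub>v n else ?R $$ (i - 1, i) \<cdot>\<^sub>v w (i - 1))) $ r"
        using mult_mat_vec[OF Wi w[of "i - 1"], of "?R $$ (i - 1, i)"] Wi_w[of "i - 1"] Wi i r
          mult_mat_vec_zero[OF Wi]
        by (auto simp del: index_mult_mat index_mult_mat_vec)
      finally show "(Wi *\<^sub>v ((As - \<theta>s i \<cdot>\<^sub>m 1\<^sub>m n) *\<^sub>v w i)) $ r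
          = (Wi *\<^sub>v (if i = 0 then 0\<^sub>v n else ?R $$ (i - 1, i) \<cdot>\<^sub>v w (i - 1))) $ r" .
    qed (use Wi in simp)
  qed (use As w in auto)
qed

lemma split_generator_if_As_frame:
  assumes As: "As \<in> carrier_mat n n" and tri: "lower_bandwidth_le 0 (Wi * As * W)"
    and diag: "\<And>k. k < n \<Longrightarrow> (Wi * As * W) $$ (k,k) = \<theta>s k"
    and hess: "irreducible_upper_hessenberg (transpose_mat (Wi * As * W))"
  shows "split_generator d A As \<theta> \<theta>s w0"
proof -
  have "det Wi * det W = 1" using det_mult[OF Wi mat_of_col_fun_carrier[of n w]] Wi_W by simp
  then have "det W \<noteq> 0" by (metis mult_zero_right zero_neq_one)
  moreover have "\<exists>\<phi>. \<phi> \<noteq> 0 \<and> (As - \<theta>s i \<cdot>\<^sub>m 1\<^sub>m n) *\<^sub>v w i = \<phi> \<cdot>\<^sub>v w (i - 1)"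
    if "1 \<le> i" "i \<le> d" for i
    using relations_if_As_frame[OF As tri diag hess that(2)] that by auto
  moreover have "(As - \<theta>s 0 \<cdot>\<^sub>m 1\<^sub>m n) *\<^sub>v w0 = 0\<^sub>v n"
    using relations_if_As_frame(1)[OF As tri diag hess, of 0] by simp
  ultimately show ?thesis unfolding split_generator_def using w0 last by blast
qed

end

lemma mat_image_span:
  assumes "M \<in> carrier_mat n n" "w \<in> carrier_vec n"
  shows "mat_image M {a \<cdot>\<^sub>v w | a. True} = {a \<cdot>\<^sub>v (M *\<^sub>v (w :: 'a::field vec)) | a. True}"
proof -
  have e: "M *\<^sub>v (a \<cdot>\<^sub>v w) = a \<cdot>\<^sub>v (M *\<^sub>v w)" for a using assms mult_mat_vec by blast
  show ?thesis
  proof (rule equalityI; rule subsetI)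
    fix x assume "x \<in> {a \<cdot>\<^sub>v (M *\<^sub>v w) | a. True}"
    then obtain a where "x = M *\<^sub>v (a \<cdot>\<^sub>v w)" using e by auto
    then show "x \<in> mat_image M {a \<cdot>\<^sub>v w | a. True}" unfolding mat_image_def by blast
  qed (auto simp: mat_image_def e)
qed

lemma span_smult:
  assumes c: "(c :: 'a::field) \<noteq> 0"
  shows "{a \<cdot>\<^sub>v (c \<cdot>\<^sub>v w) | a. True} = {a \<cdot>\<^sub>v w | a. True}"
proof (rule equalityI; rule subsetI)
  fix x assume "x \<in> {a \<cdot>\<^sub>v w | a. True}"
  then obtain a where "x = a \<cdot>\<^sub>v w" by auto
  then have "x = (a / c) \<cdot>\<^sub>v (c \<cdot>\<^sub>v w)" using c by (simp add: smult_smult_assoc)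
  then show "x \<in> {a \<cdot>\<^sub>v (c \<cdot>\<^sub>v w) | a. True}" by blast
qed (auto simp: smult_smult_assoc)

lemma span_zero: "{a \<cdot>\<^sub>v 0\<^sub>v n | a. True} = {0\<^sub>v n :: 'a::field vec}"
  by (auto intro!: eq_vecI exI[of _ 0])

lemma decomposition_of_basis:
  fixes u :: "nat \<Rightarrow> 'a::field vec"
  assumes u: "\<And>i. i \<le> d \<Longrightarrow> u i \<in> carrier_vec (Suc d) \<and> u i \<noteq> 0\<^sub>v (Suc d)"
    and det: "det (mat_of_col_fun (Suc d) u) \<noteq> 0"
  shows "decomposition d (\<lambda>i. {a \<cdot>\<^sub>v u i | a. True})"
proof -
  let ?U = "mat_of_col_fun (Suc d) u"
  have uc: "\<And>i. i \<le> d \<Longrightarrow> u i \<in> carrier_vec (Suc d)" using u by auto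
  obtain Ui where Ui: "Ui \<in> carrier_mat (Suc d) (Suc d)" "?U * Ui = 1\<^sub>m (Suc d)"
    using det_non_zero_imp_unit[OF mat_of_col_fun_carrier det, of "()"] unfolding Units_def ring_mat_def by auto
  have spans: "\<exists>f. (\<forall>i\<le>d. f i \<in> {a \<cdot>\<^sub>v u i | a. True}) \<and> v = finsum_vec TYPE('a) (Suc d) f {0..d}"
    if v: "v \<in> carrier_vec (Suc d)" for v
  proof -
    define a where "a = Ui *\<^sub>v v"
    have "finsum_vec TYPE('a) (Suc d) (\<lambda>i. a $ i \<cdot>\<^sub>v u i) {0..d} = ?U *\<^sub>v a"
      using Ui v by (intro finsum_vec_eq_mult_mat_of_col_fun[of d u a, OF uc]) (auto simp: a_def)
    also have "\<dots> = (?U * Ui) *\<^sub>v v"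
      using Ui(1) v by (simp add: a_def assoc_mult_mat_vec[of _ "Suc d" "Suc d" _ "Suc d"])
    finally have "finsum_vec TYPE('a) (Suc d) (\<lambda>i. a $ i \<cdot>\<^sub>v u i) {0..d} = v" using Ui v by simp
    then show ?thesis using Ui v by (intro exI[of _ "\<lambda>i. a $ i \<cdot>\<^sub>v u i"]) auto
  qed
  have independent: "\<forall>i\<le>d. f i = 0\<^sub>v (Suc d)"
    if f: "\<forall>i\<le>d. f i \<in> {a \<cdot>\<^sub>v u i | a. True}" and sum: "finsum_vec TYPE('a) (Suc d) f {0..d} = 0\<^sub>v (Suc d)" for f
  proof -
    have "\<forall>i. \<exists>a. i \<le> d \<longrightarrow> f i = a \<cdot>\<^sub>v u i" using f by blast
    then obtain g where g: "\<And>i. i \<le> d \<Longrightarrow> f i = g i \<cdot>\<^sub>v u i" by metis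
    define a where "a = vec (Suc d) g"
    have fa: "\<And>i. i \<le> d \<Longrightarrow> f i = a $ i \<cdot>\<^sub>v u i" using g by (simp add: a_def)
    have "?U *\<^sub>v a = 0\<^sub>v (Suc d)"
      using finsum_vec_eq_mult_mat_of_col_fun[of d u a f, OF uc _ fa] sum by (simp add: a_def)
    moreover have "a \<in> carrier_vec (Suc d)" by (simp add: a_def)
    ultimately have "a = 0\<^sub>v (Suc d)"
      using det_0_iff_vec_prod_zero[OF mat_of_col_fun_carrier, of "Suc d" u] det by blast
    show ?thesis
    proof (intro allI impI)
      fix i assume "i \<le> d"
      then show "f i = 0\<^sub>v (Suc d)" using fa[of i] uc[of i] \<open>a = 0\<^sub>v (Suc d)\<close> by (auto intro!: eq_vecI)
    qed
  qed
  show ?thesis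
    unfolding decomposition_def one_dim_subspace_def using u spans independent by blast
qed

lemma one_dim_subspace_span_nonzero:
  assumes "one_dim_subspace n {a \<cdot>\<^sub>v w | a. True}" and w: "w \<in> carrier_vec n"
  shows "w \<noteq> 0\<^sub>v n"
proof
  assume w0: "w = 0\<^sub>v n"
  obtain g where g: "g \<noteq> 0\<^sub>v n" "{a \<cdot>\<^sub>v w | a. True} = {c \<cdot>\<^sub>v g | c. True}"
    using assms(1) unfolding one_dim_subspace_def by blast
  have "g \<in> {a \<cdot>\<^sub>v w | a. True}" unfolding g(2) by (auto intro!: exI[of _ 1])
  then have "g = 0\<^sub>v n" using w0 by (auto intro!: eq_vecI)
  then show False using g(1) by simp
qed

lemma decomposition_det:
  fixes u :: "nat \<Rightarrow> 'a::field vec"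
  assumes dec: "decomposition d U" and U: "\<And>i. i \<le> d \<Longrightarrow> U i = {a \<cdot>\<^sub>v u i | a. True}"
    and u: "\<And>i. i \<le> d \<Longrightarrow> u i \<in> carrier_vec (Suc d) \<and> u i \<noteq> 0\<^sub>v (Suc d)"
  shows "det (mat_of_col_fun (Suc d) u) \<noteq> 0"
proof
  let ?n = "Suc d"
  assume "det (mat_of_col_fun ?n u) = 0"
  then obtain a where a: "a \<in> carrier_vec ?n" "a \<noteq> 0\<^sub>v ?n" "mat_of_col_fun ?n u *\<^sub>v a = 0\<^sub>v ?n"
    using det_0_iff_vec_prod_zero[OF mat_of_col_fun_carrier] by blast
  have "finsum_vec TYPE('a) ?n (\<lambda>i. a $ i \<cdot>\<^sub>v u i) {0..d} = mat_of_col_fun ?n u *\<^sub>v a"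
    using u by (intro finsum_vec_eq_mult_mat_of_col_fun[OF _ a(1)]) auto
  then have sum: "finsum_vec TYPE('a) ?n (\<lambda>i. a $ i \<cdot>\<^sub>v u i) {0..d} = 0\<^sub>v ?n" using a(3) by simp
  have mem: "\<forall>i\<le>d. a $ i \<cdot>\<^sub>v u i \<in> U i" using U by auto
  have independent: "\<forall>f. (\<forall>i\<le>d. f i \<in> U i) \<and> finsum_vec TYPE('a) ?n f {0..d} = 0\<^sub>v ?n
      \<longrightarrow> (\<forall>i\<le>d. f i = 0\<^sub>v ?n)"
    using dec unfolding decomposition_def by (elim conjE)
  have zero: "a $ i \<cdot>\<^sub>v u i = 0\<^sub>v ?n" if "i \<le> d" for i
    using independent[rule_format, OF conjI[OF mem sum]] that .
  have "a = 0\<^sub>v ?n"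
  proof (rule eq_vecI)
    fix i assume "i < dim_vec (0\<^sub>v ?n :: 'a vec)"
    then have i: "i \<le> d" by simp
    obtain r where r: "r < ?n" "u i $ r \<noteq> 0"
      using u[OF i] by (metis carrier_vecD eq_vecI index_zero_vec(1,2))
    have "(a $ i \<cdot>\<^sub>v u i) $ r = 0" using zero[OF i] r by simp
    then show "a $ i = 0\<^sub>v ?n $ i" using r i u[OF i] by auto
  qed (use a in simp)
  then show False using a(2) by simp
qed

lemma split_decomposition_if_split_generator:
  fixes A As :: "'a::field mat"
  assumes A: "A \<in> carrier_mat (Suc d) (Suc d)" and As: "As \<in> carrier_mat (Suc d) (Suc d)"
    and gen: "split_generator d A As \<theta> \<theta>s w0"
  shows "split_decomposition d A As \<theta> \<theta>s (\<lambda>i. {c \<cdot>\<^sub>v newton_vec A \<theta> w0 i | c. True})"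
proof -
  let ?n = "Suc d"
  let ?w = "newton_vec A \<theta> w0"
  let ?U = "\<lambda>i. {c \<cdot>\<^sub>v ?w i | c. True}"
  have w0: "w0 \<in> carrier_vec ?n" and det: "det (mat_of_col_fun ?n ?w) \<noteq> 0"
    and last: "?w ?n = 0\<^sub>v ?n" and first: "(As - \<theta>s 0 \<cdot>\<^sub>m 1\<^sub>m ?n) *\<^sub>v w0 = 0\<^sub>v ?n"
    and lower: "\<And>i. 1 \<le> i \<Longrightarrow> i \<le> d \<Longrightarrow>
      \<exists>\<phi>. \<phi> \<noteq> 0 \<and> (As - \<theta>s i \<cdot>\<^sub>m 1\<^sub>m ?n) *\<^sub>v ?w i = \<phi> \<cdot>\<^sub>v ?w (i - 1)"
    using gen unfolding split_generator_def by auto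
  have w: "?w i \<in> carrier_vec ?n" for i by (rule newton_vec_carrier[OF A w0])
  obtain Wi where Wi: "Wi \<in> carrier_mat ?n ?n" "Wi * mat_of_col_fun ?n ?w = 1\<^sub>m ?n"
    using det_non_zero_imp_unit[OF mat_of_col_fun_carrier det, of "()"]
    unfolding Units_def ring_mat_def by auto
  interpret newton_frame d A \<theta> w0 Wi by unfold_locales (use A w0 last Wi in auto)
  have "?w i \<noteq> 0\<^sub>v ?n" if "i \<le> d" for i
  proof
    assume "?w i = 0\<^sub>v ?n"
    then have "Wi *\<^sub>v ?w i = 0\<^sub>v ?n" using mult_mat_vec_zero[OF Wi(1)] by simp
    moreover have "Wi *\<^sub>v ?w i = unit_vec ?n i" using Wi_w[of i] that by simp
    ultimately show False using unit_vec_nonzero[of i ?n] that by simp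
  qed
  then have "decomposition d ?U" using w det by (intro decomposition_of_basis) auto
  moreover have "\<forall>i<d. mat_image (A - \<theta> i \<cdot>\<^sub>m 1\<^sub>m ?n) (?U i) = ?U (Suc i)"
    using mat_image_span[OF shift_carrier_mat[OF A] w] A by simp
  moreover have "mat_image (A - \<theta> d \<cdot>\<^sub>m 1\<^sub>m ?n) (?U d) = {0\<^sub>v ?n}"
    using mat_image_span[OF shift_carrier_mat[OF A] w, of "\<theta> d" d] A last span_zero by simp
  moreover have "\<forall>i. 1 \<le> i \<and> i \<le> d \<longrightarrow> mat_image (As - \<theta>s i \<cdot>\<^sub>m 1\<^sub>m ?n) (?U i) = ?U (i - 1)"
  proof (intro allI impI)
    fix i assume "1 \<le> i \<and> i \<le> d"
    then obtain \<phi> where \<phi>: "\<phi> \<noteq> 0" "(As - \<theta>s i \<cdot>\<^sub>m 1\<^sub>m ?n) *\<^sub>v ?w i = \<phi> \<cdot>\<^sub>v ?w (i - 1)"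
      using lower by blast
    have "mat_image (As - \<theta>s i \<cdot>\<^sub>m 1\<^sub>m ?n) (?U i) = {a \<cdot>\<^sub>v (\<phi> \<cdot>\<^sub>v ?w (i - 1)) | a. True}"
      using mat_image_span[OF shift_carrier_mat[OF As] w, of "\<theta>s i" i] \<phi>(2) by simp
    then show "mat_image (As - \<theta>s i \<cdot>\<^sub>m 1\<^sub>m ?n) (?U i) = ?U (i - 1)"
      using span_smult[OF \<phi>(1)] by simp
  qed
  moreover have "mat_image (As - \<theta>s 0 \<cdot>\<^sub>m 1\<^sub>m ?n) (?U 0) = {0\<^sub>v ?n}"
    using mat_image_span[OF shift_carrier_mat[OF As] w, of "\<theta>s 0" 0] first span_zero by simp
  ultimately show ?thesis unfolding split_decomposition_def by blast
qed

lemma split_decomposition_eq_newton_spans: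
  assumes A: "A \<in> carrier_mat (Suc d) (Suc d)" and split: "split_decomposition d A As \<theta> \<theta>s U"
    and w0: "w0 \<in> carrier_vec (Suc d)" "U 0 = {c \<cdot>\<^sub>v w0 | c. True}" and i: "i \<le> d"
  shows "U i = {c \<cdot>\<^sub>v newton_vec A \<theta> w0 i | c. True}"
  using i
proof (induction i)
  case (Suc i)
  have "\<forall>i<d. mat_image (A - \<theta> i \<cdot>\<^sub>m 1\<^sub>m (Suc d)) (U i) = U (Suc i)"
    using split unfolding split_decomposition_def by blast
  then have "U (Suc i) = mat_image (A - \<theta> i \<cdot>\<^sub>m 1\<^sub>m (Suc d)) (U i)" using Suc.prems by simp
  then show ?case
    using Suc mat_image_span[OF shift_carrier_mat[OF A] newton_vec_carrier[OF A w0(1)]] A by simp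
qed (use w0 in simp)

lemma split_generator_if_split_decomposition:
  fixes A As :: "'a::field mat"
  assumes A: "A \<in> carrier_mat (Suc d) (Suc d)" and As: "As \<in> carrier_mat (Suc d) (Suc d)"
    and split: "split_decomposition d A As \<theta> \<theta>s U"
  shows "\<exists>w0. split_generator d A As \<theta> \<theta>s w0"
proof -
  let ?n = "Suc d"
  have dec: "decomposition d U" using split by (simp add: split_decomposition_def)
  obtain w0 where w0: "w0 \<in> carrier_vec ?n" "U 0 = {c \<cdot>\<^sub>v w0 | c. True}"
    using dec unfolding decomposition_def one_dim_subspace_def by blast
  let ?w = "newton_vec A \<theta> w0"
  have w: "?w i \<in> carrier_vec ?n" for i by (rule newton_vec_carrier[OF A w0(1)])
  note U = split_decomposition_eq_newton_spans[OF A split w0]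
  have w_in: "?w i \<in> U i" if "i \<le> d" for i using U[OF that] by (auto intro!: exI[of _ 1])
  have w_nz: "?w i \<noteq> 0\<^sub>v ?n" if "i \<le> d" for i
    using one_dim_subspace_span_nonzero[OF _ w] U[OF that] dec that unfolding decomposition_def by metis
  have image_mem: "X *\<^sub>v ?w i \<in> mat_image X (U i)" if "i \<le> d" for i X
    using w_in[OF that] unfolding mat_image_def by blast
  have "?w ?n = 0\<^sub>v ?n"
    using image_mem[of d "A - \<theta> d \<cdot>\<^sub>m 1\<^sub>m ?n"] split A unfolding split_decomposition_def by auto
  moreover have "(As - \<theta>s 0 \<cdot>\<^sub>m 1\<^sub>m ?n) *\<^sub>v w0 = 0\<^sub>v ?n"
    using image_mem[of 0 "As - \<theta>s 0 \<cdot>\<^sub>m 1\<^sub>m ?n"] split unfolding split_decomposition_def by auto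
  moreover have "\<exists>\<phi>. \<phi> \<noteq> 0 \<and> (As - \<theta>s i \<cdot>\<^sub>m 1\<^sub>m ?n) *\<^sub>v ?w i = \<phi> \<cdot>\<^sub>v ?w (i - 1)"
    if i: "1 \<le> i" "i \<le> d" for i
  proof -
    have image: "mat_image (As - \<theta>s i \<cdot>\<^sub>m 1\<^sub>m ?n) (U i) = U (i - 1)"
      using split i unfolding split_decomposition_def by auto
    then have "(As - \<theta>s i \<cdot>\<^sub>m 1\<^sub>m ?n) *\<^sub>v ?w i \<in> U (i - 1)"
      using image_mem[OF i(2), of "As - \<theta>s i \<cdot>\<^sub>m 1\<^sub>m ?n"] by simp
    then obtain \<phi> where \<phi>: "(As - \<theta>s i \<cdot>\<^sub>m 1\<^sub>m ?n) *\<^sub>v ?w i = \<phi> \<cdot>\<^sub>v ?w (i - 1)"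
      using U[of "i - 1"] i by auto
    have "\<phi> \<noteq> 0"
    proof
      assume "\<phi> = 0"
      have "U (i - 1) = {a \<cdot>\<^sub>v (\<phi> \<cdot>\<^sub>v ?w (i - 1)) | a. True}"
        using image U[OF i(2)] mat_image_span[OF shift_carrier_mat[OF As] w, of "\<theta>s i" i] \<phi> by simp
      also have "\<dots> = {0\<^sub>v ?n}" using \<open>\<phi> = 0\<close> w[of "i - 1"] by (auto intro!: eq_vecI)
      finally have "U (i - 1) = {0\<^sub>v ?n}" .
      moreover have "i - 1 \<le> d" using i by simp
      ultimately show False using w_in w_nz by blast
    qed
    then show ?thesis using \<phi> by blast
  qed
  moreover have "det (mat_of_col_fun ?n ?w) \<noteq> 0"
    using decomposition_det[OF dec U] w w_nz by blast
  ultimately show ?thesis using w0 unfolding split_generator_def by blast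
qed

section \<open>Leonard systems\<close>

text \<open>Qinv * A * Q is the matrix of A in an eigenbasis of As, and Pinv * As * P that of As in an
  eigenbasis of A.\<close>

locale eigenbases =
  A: diagonalization d A \<theta> P Pinv + As: diagonalization d As \<theta>s Q Qinv
  for d :: nat and A As :: "'a::field mat" and \<theta> \<theta>s :: "nat \<Rightarrow> 'a" and P Pinv Q Qinv :: "'a mat"
begin

abbreviation "n \<equiv> Suc d"

lemma leonard_system_iff_tridiagonal:
  "leonard_system d A As \<theta> \<theta>s \<longleftrightarrow>
     irreducible_tridiagonal (Qinv * A * Q) \<and> irreducible_tridiagonal (Pinv * As * P)"
proof -
  have abs_gt1: "\<bar>int i - int j\<bar> > 1 \<longleftrightarrow> j + 1 < i \<or> i + 1 < j" for i j :: nat by auto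
  have abs_eq1: "\<bar>int i - int j\<bar> = 1 \<longleftrightarrow> i = Suc j \<or> j = Suc i" for i j :: nat by auto
  have entries: "irreducible_tridiagonal M \<longleftrightarrow> (\<forall>i\<le>d. \<forall>j\<le>d.
      (j + 1 < i \<or> i + 1 < j \<longrightarrow> M $$ (i,j) = 0) \<and> (i = Suc j \<or> j = Suc i \<longrightarrow> M $$ (i,j) \<noteq> 0))"
    if "M \<in> carrier_mat n n" for M
    using that unfolding irreducible_tridiagonal_def lower_bandwidth_le_def upper_bandwidth_le_def
    by (auto simp: less_Suc_eq_le)
  have Es: "prim_idem d As \<theta>s i * A * prim_idem d As \<theta>s j = 0\<^sub>m n n \<longleftrightarrow> (Qinv * A * Q) $$ (i,j) = 0"
    if "i \<le> d" "j \<le> d" for i j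
    by (rule As.prim_idem_mult_mult_eq_0_iff[OF A.X that])
  have Ea: "prim_idem d A \<theta> i * As * prim_idem d A \<theta> j = 0\<^sub>m n n \<longleftrightarrow> (Pinv * As * P) $$ (i,j) = 0"
    if "i \<le> d" "j \<le> d" for i j
    by (rule A.prim_idem_mult_mult_eq_0_iff[OF As.X that])
  have "leonard_system d A As \<theta> \<theta>s \<longleftrightarrow> (\<forall>i\<le>d. \<forall>j\<le>d.
      (j + 1 < i \<or> i + 1 < j \<longrightarrow> (Qinv * A * Q) $$ (i,j) = 0) \<and>
      (i = Suc j \<or> j = Suc i \<longrightarrow> (Qinv * A * Q) $$ (i,j) \<noteq> 0) \<and>
      (j + 1 < i \<or> i + 1 < j \<longrightarrow> (Pinv * As * P) $$ (i,j) = 0) \<and>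
      (i = Suc j \<or> j = Suc i \<longrightarrow> (Pinv * As * P) $$ (i,j) \<noteq> 0))"
    unfolding leonard_system_def abs_gt1 abs_eq1 using Es Ea by (intro all_cong1 imp_cong refl) blast
  also have "\<dots> \<longleftrightarrow> irreducible_tridiagonal (Qinv * A * Q) \<and> irreducible_tridiagonal (Pinv * As * P)"
    using entries[of "Qinv * A * Q"] entries[of "Pinv * As * P"] A.X As.X A.P A.Pinv As.P As.Pinv
    by auto
  finally show ?thesis .
qed

lemma coords_zero_pattern_symmetric:
  assumes \<sigma>: "antiautomorphism n \<sigma>" "\<sigma> A = A" "\<sigma> As = As" and i: "i \<le> d" and j: "j \<le> d"
  shows "(Qinv * A * Q) $$ (i,j) = 0 \<longleftrightarrow> (Qinv * A * Q) $$ (j,i) = 0"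
    and "(Pinv * As * P) $$ (i,j) = 0 \<longleftrightarrow> (Pinv * As * P) $$ (j,i) = 0"
proof -
  have "prim_idem d As \<theta>s i * A * prim_idem d As \<theta>s j = 0\<^sub>m n n \<longleftrightarrow>
        prim_idem d As \<theta>s j * A * prim_idem d As \<theta>s i = 0\<^sub>m n n"
    using antiautomorphism_fixes_prim_idem[OF \<sigma>(1) As.X \<sigma>(3)] \<sigma>
    by (intro antiautomorphism_mult3_eq_0_iff[OF \<sigma>(1) prim_idem_carrier[OF As.X] A.X prim_idem_carrier[OF As.X]])
  then show "(Qinv * A * Q) $$ (i,j) = 0 \<longleftrightarrow> (Qinv * A * Q) $$ (j,i) = 0"
    using As.prim_idem_mult_mult_eq_0_iff[OF A.X] i j by simp
  have "prim_idem d A \<theta> i * As * prim_idem d A \<theta> j = 0\<^sub>m n n \<longleftrightarrow>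
        prim_idem d A \<theta> j * As * prim_idem d A \<theta> i = 0\<^sub>m n n"
    using antiautomorphism_fixes_prim_idem[OF \<sigma>(1) A.X \<sigma>(2)] \<sigma>
    by (intro antiautomorphism_mult3_eq_0_iff[OF \<sigma>(1) prim_idem_carrier[OF A.X] As.X prim_idem_carrier[OF A.X]])
  then show "(Pinv * As * P) $$ (i,j) = 0 \<longleftrightarrow> (Pinv * As * P) $$ (j,i) = 0"
    using A.prim_idem_mult_mult_eq_0_iff[OF As.X] i j by simp
qed

lemma split_generator_if_tridiagonal:
  assumes trB: "irreducible_tridiagonal (Qinv * A * Q)" and trBs: "irreducible_tridiagonal (Pinv * As * P)"
  shows "split_generator d A As \<theta> \<theta>s (col Q 0)"
proof -
  let ?U = "mat_of_col_fun n (newton_vec A \<theta> (col Q 0))"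
  have q0: "col Q 0 \<in> carrier_vec n" by (rule col_carrier_vec[OF _ As.P]) simp
  have "irreducible_upper_hessenberg (Qinv * A * Q)"
    using trB A.X As.P As.Pinv irreducible_tridiagonal_iff_hessenberg[of "Qinv * A * Q" n] by simp
  note T = As.newton_basis_triangular_coords[OF A.X this]
  obtain Ui where Ui: "Ui \<in> carrier_mat n n" "?U * Ui = 1\<^sub>m n" "Ui * ?U = 1\<^sub>m n"
    using det_non_zero_imp_unit[OF mat_of_col_fun_carrier T(2)] unfolding Units_def ring_mat_def by auto
  interpret F: newton_frame d A \<theta> "col Q 0" Ui
    by unfold_locales (use A.X q0 A.newton_vec_annihilated[OF q0] Ui in auto)
  note R = As.conj_triangular_if_coords_triangular[OF mat_of_col_fun_carrier Ui(1) Ui(3) T(1)]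
  have "irreducible_upper_hessenberg (transpose_mat (Ui * As * ?U))"
    using A.hessenberg_transpose_frame_of_upper_coords[OF mat_of_col_fun_carrier Ui(1) Ui(2) Ui(3)
        A.coords_newton_basis_upper_triangular[OF q0] As.X] trBs A.P A.Pinv As.X
      irreducible_tridiagonal_iff_hessenberg[of "Pinv * As * P" n] by simp
  then show ?thesis using F.split_generator_if_As_frame[OF As.X R] by simp
qed

lemma tridiagonal_if_split_generator:
  assumes gen: "split_generator d A As \<theta> \<theta>s w0"
    and \<sigma>: "antiautomorphism n \<sigma>" "\<sigma> A = A" "\<sigma> As = As"
  shows "irreducible_tridiagonal (Qinv * A * Q) \<and> irreducible_tridiagonal (Pinv * As * P)"
proof -
  let ?w = "newton_vec A \<theta> w0"
  have w0: "w0 \<in> carrier_vec n" and det: "det (mat_of_col_fun n ?w) \<noteq> 0"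
    and last: "?w n = 0\<^sub>v n" and first: "(As - \<theta>s 0 \<cdot>\<^sub>m 1\<^sub>m n) *\<^sub>v w0 = 0\<^sub>v n"
    using gen unfolding split_generator_def by blast+
  have "\<forall>i. \<exists>\<phi>. 1 \<le> i \<and> i \<le> d \<longrightarrow> \<phi> \<noteq> 0 \<and> (As - \<theta>s i \<cdot>\<^sub>m 1\<^sub>m n) *\<^sub>v ?w i = \<phi> \<cdot>\<^sub>v ?w (i - 1)"
    using gen unfolding split_generator_def by blast
  then obtain \<phi> where \<phi>: "\<And>i. 1 \<le> i \<Longrightarrow> i \<le> d \<Longrightarrow>
      \<phi> i \<noteq> 0 \<and> (As - \<theta>s i \<cdot>\<^sub>m 1\<^sub>m n) *\<^sub>v ?w i = \<phi> i \<cdot>\<^sub>v ?w (i - 1)" by metis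
  obtain Wi where Wi: "Wi \<in> carrier_mat n n" "Wi * mat_of_col_fun n ?w = 1\<^sub>m n"
    using det_non_zero_imp_unit[OF mat_of_col_fun_carrier det, of "()"]
    unfolding Units_def ring_mat_def by auto
  interpret F: newton_frame d A \<theta> w0 Wi by unfold_locales (use A.X w0 last Wi in auto)
  note R = F.As_frame_if_relations[OF As.X first \<phi>]
  have "irreducible_upper_hessenberg (Qinv * A * Q)"
    by (rule As.hessenberg_coords_of_lower_frame[OF mat_of_col_fun_carrier Wi(1) F.W_Wi Wi(2) R(1,2) A.X
          F.A_frame(2)])
  moreover have "irreducible_upper_hessenberg (transpose_mat (Pinv * As * P))"
    by (rule A.hessenberg_transpose_coords_of_upper_frame[OF mat_of_col_fun_carrier Wi(1) F.W_Wi Wi(2)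
          F.A_frame(1,3) As.X R(3)])
  moreover have "Qinv * A * Q \<in> carrier_mat (Suc d) (Suc d)" "Pinv * As * P \<in> carrier_mat (Suc d) (Suc d)"
    using A.X As.X A.P A.Pinv As.P As.Pinv by simp_all
  moreover note sym = coords_zero_pattern_symmetric[OF \<sigma>, unfolded less_Suc_eq_le[symmetric]]
  ultimately show ?thesis
    using irreducible_tridiagonal_if_zero_pattern_symmetric
      irreducible_tridiagonal_if_transpose_zero_pattern_symmetric
    by (metis less_Suc_eq_le)
qed

end

theorem theorem5p2:
  fixes d :: nat and A As :: "'a::field mat" and \<theta> \<theta>s :: "nat \<Rightarrow> 'a"
  assumes "multiplicity_free d A" and "multiplicity_free d As"
    and "eigen_ordering d A \<theta>" and "eigen_ordering d As \<theta>s"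
  shows "leonard_system d A As \<theta> \<theta>s \<longleftrightarrow>
           (\<exists>U. split_decomposition d A As \<theta> \<theta>s U) \<and>
           (\<exists>\<sigma>. antiautomorphism (Suc d) \<sigma> \<and> \<sigma> A = A \<and> \<sigma> As = As)"
proof -
  obtain P Pinv Q Qinv where "diagonalization d A \<theta> P Pinv" "diagonalization d As \<theta>s Q Qinv"
    using diagonalization_if_multiplicity_free assms by metis
  then interpret eigenbases d A As \<theta> \<theta>s P Pinv Q Qinv by (simp add: eigenbases_def)
  show ?thesis
  proof
    assume "leonard_system d A As \<theta> \<theta>s"
    then have tri: "irreducible_tridiagonal (Qinv * A * Q)" "irreducible_tridiagonal (Pinv * As * P)"
      using leonard_system_iff_tridiagonal by simp_all
    show "(\<exists>U. split_decomposition d A As \<theta> \<theta>s U) \<and>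
        (\<exists>\<sigma>. antiautomorphism (Suc d) \<sigma> \<and> \<sigma> A = A \<and> \<sigma> As = As)"
      using split_decomposition_if_split_generator[OF A.X As.X split_generator_if_tridiagonal[OF tri]]
        antiautomorphism_fixing_tridiagonal_pair[OF As.P As.Pinv As.P_Pinv As.Pinv_P A.X As.X As.X_P tri(1)]
      by blast
  next
    assume "(\<exists>U. split_decomposition d A As \<theta> \<theta>s U) \<and>
        (\<exists>\<sigma>. antiautomorphism (Suc d) \<sigma> \<and> \<sigma> A = A \<and> \<sigma> As = As)"
    then obtain U \<sigma> where U: "split_decomposition d A As \<theta> \<theta>s U"
      and \<sigma>: "antiautomorphism (Suc d) \<sigma>" "\<sigma> A = A" "\<sigma> As = As" by blast
    obtain w0 where "split_generator d A As \<theta> \<theta>s w0"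
      using split_generator_if_split_decomposition[OF A.X As.X U] by blast
    then show "leonard_system d A As \<theta> \<theta>s"
      using tridiagonal_if_split_generator[OF _ \<sigma>] leonard_system_iff_tridiagonal by blast
  qed
qed

end
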